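(* Let $\mathcal T=(T_1,\dots,T_n)\in B(H)^n$. Then $$\bigcup_{\mathcal K\in\mathcal K(H)^n}\mathcal D_{\rm const}(\mathcal T+\mathcal K)=W_{\rm e}(\mathcal T).$$
   Context: $H$ is an infinite-dimensional complex separable Hilbert space and $\mathcal K(H)$ the compact operators on $H$; for $\mathcal K=(K_1,\dots,K_n)$, $\mathcal T+\mathcal K=(T_1+K_1,\dots,T_n+K_n)$. $W_{\rm e}(\mathcal T)$ is the set of $\lambda\in\mathbb C^n$ such that $\langle T_jx_k,x_k\rangle\to\lambda_j$ for all $j$ for some orthonormal sequence $(x_k)$. $\mathcal D_{\rm const}(\mathcal T)$ is the set of $\lambda\in\mathbb C^n$ for which there is an orthonormal basis $(u_k)$ of $H$ with $\langle T_ju_k,u_k\rangle=\lambda_j$ for all $k$ and $j$. *)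

theory Defs
  imports "HOL-Analysis.Analysis"
begin

text \<open>Concrete model of an infinite-dimensional separable complex Hilbert space:
  H = l2(nat), square-summable complex sequences.\<close>

definition l2 :: "(nat \<Rightarrow> complex) set" where
  "l2 = {x. summable (\<lambda>k. (cmod (x k))^2)}"

definition l2_inner :: "(nat \<Rightarrow> complex) \<Rightarrow> (nat \<Rightarrow> complex) \<Rightarrow> complex" where
  "l2_inner x y = (\<Sum>k. x k * cnj (y k))"

definition l2_norm :: "(nat \<Rightarrow> complex) \<Rightarrow> real" where
  "l2_norm x = sqrt (\<Sum>k. (cmod (x k))^2)"

text \<open>Bounded linear operators on H (only their values on l2 matter).\<close>
definition bounded_op :: "((nat \<Rightarrow> complex) \<Rightarrow> (nat \<Rightarrow> complex)) \<Rightarrow> bool" where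
  "bounded_op T \<longleftrightarrow>
     (\<forall>x\<in>l2. T x \<in> l2) \<and>
     (\<forall>x\<in>l2. \<forall>y\<in>l2. \<forall>a b. T (\<lambda>k. a * x k + b * y k) = (\<lambda>k. a * T x k + b * T y k)) \<and>
     (\<exists>C. \<forall>x\<in>l2. l2_norm (T x) \<le> C * l2_norm x)"

definition compact_op :: "((nat \<Rightarrow> complex) \<Rightarrow> (nat \<Rightarrow> complex)) \<Rightarrow> bool" where
  "compact_op K \<longleftrightarrow> bounded_op K \<and>
     (\<forall>x::nat \<Rightarrow> (nat \<Rightarrow> complex). (\<forall>i. x i \<in> l2) \<and> (\<exists>B. \<forall>i. l2_norm (x i) \<le> B) \<longrightarrow>
        (\<exists>r z. strict_mono r \<and> z \<in> l2 \<and>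
              (\<lambda>i. l2_norm (\<lambda>k. K (x (r i)) k - z k)) \<longlonglongrightarrow> 0))"

definition orthonormal_seq :: "(nat \<Rightarrow> (nat \<Rightarrow> complex)) \<Rightarrow> bool" where
  "orthonormal_seq u \<longleftrightarrow> (\<forall>k. u k \<in> l2) \<and>
     (\<forall>i j. l2_inner (u i) (u j) = (if i = j then 1 else 0))"

definition orthonormal_basis :: "(nat \<Rightarrow> (nat \<Rightarrow> complex)) \<Rightarrow> bool" where
  "orthonormal_basis u \<longleftrightarrow> orthonormal_seq u \<and>
     (\<forall>y\<in>l2. (\<forall>k. l2_inner y (u k) = 0) \<longrightarrow> y = (\<lambda>_. 0))"

definition ess_num_range ::
  "('n::finite \<Rightarrow> (nat \<Rightarrow> complex) \<Rightarrow> (nat \<Rightarrow> complex)) \<Rightarrow> (complex ^ 'n) set" where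
  "ess_num_range T = {lam. \<exists>x. orthonormal_seq x \<and>
      (\<forall>j. (\<lambda>k. l2_inner (T j (x k)) (x k)) \<longlonglongrightarrow> lam $ j)}"

definition D_const ::
  "('n::finite \<Rightarrow> (nat \<Rightarrow> complex) \<Rightarrow> (nat \<Rightarrow> complex)) \<Rightarrow> (complex ^ 'n) set" where
  "D_const T = {lam. \<exists>u. orthonormal_basis u \<and>
      (\<forall>k j. l2_inner (T j (u k)) (u k) = lam $ j)}"

end

theory Submission
  imports Defs
begin
section \<open>The sequence space\<close>

definition supp_below :: "nat \<Rightarrow> (nat \<Rightarrow> complex) \<Rightarrow> bool" where
  "supp_below L x \<longleftrightarrow> (\<forall>m\<ge>L. x m = 0)"

lemma mem_l2_iff: "x \<in> l2 \<longleftrightarrow> summable (\<lambda>k. (cmod (x k))^2)"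
  by (simp add: l2_def)

lemma cmod_mult_cnj_le: "cmod (a * cnj b) \<le> ((cmod a)^2 + (cmod b)^2) / 2"
proof -
  have "0 \<le> (cmod a - cmod b)^2" by simp
  thus ?thesis by (simp add: norm_mult power2_eq_square algebra_simps)
qed

lemma cmod_add_power2_le: "(cmod (p + q))^2 \<le> 2 * (cmod p)^2 + 2 * (cmod q)^2"
proof -
  have "(cmod (p + q))^2 \<le> (cmod p + cmod q)^2"
    by (simp add: power_mono norm_triangle_ineq)
  also have "\<dots> \<le> 2 * (cmod p)^2 + 2 * (cmod q)^2"
    using zero_le_power2[of "cmod p - cmod q"] by (simp add: power2_eq_square algebra_simps)
  finally show ?thesis .
qed

lemma summable_norm_l2_inner:
  assumes "x \<in> l2" "y \<in> l2" shows "summable (\<lambda>k. cmod (x k * cnj (y k)))"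
proof (rule summable_comparison_test)
  show "\<exists>N. \<forall>n\<ge>N. norm (cmod (x n * cnj (y n))) \<le> ((cmod (x n))^2 + (cmod (y n))^2) / 2"
    using cmod_mult_cnj_le by auto
  show "summable (\<lambda>n. ((cmod (x n))^2 + (cmod (y n))^2) / 2)"
    using assms by (intro summable_divide summable_add) (auto simp: mem_l2_iff)
qed

lemma summable_l2_inner:
  assumes "x \<in> l2" "y \<in> l2" shows "summable (\<lambda>k. x k * cnj (y k))"
  using summable_norm_l2_inner[OF assms] by (rule summable_norm_cancel)

lemma l2_lincomb:
  assumes "x \<in> l2" "y \<in> l2" shows "(\<lambda>k. a * x k + b * y k) \<in> l2"
  unfolding mem_l2_iff
proof (rule summable_comparison_test)
  show "\<exists>N. \<forall>n\<ge>N. norm ((cmod (a * x n + b * y n))^2)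
      \<le> 2 * (cmod a)^2 * (cmod (x n))^2 + 2 * (cmod b)^2 * (cmod (y n))^2"
    using cmod_add_power2_le[of "a * x n" "b * y n" for n] by (simp add: norm_mult power_mult_distrib mult.assoc)
  show "summable (\<lambda>n. 2 * (cmod a)^2 * (cmod (x n))^2 + 2 * (cmod b)^2 * (cmod (y n))^2)"
    using assms by (intro summable_add summable_mult) (auto simp: mem_l2_iff)
qed

lemma l2_add: "x \<in> l2 \<Longrightarrow> y \<in> l2 \<Longrightarrow> (\<lambda>k. x k + y k) \<in> l2"
  using l2_lincomb[of x y 1 1] by simp

lemma l2_diff: "x \<in> l2 \<Longrightarrow> y \<in> l2 \<Longrightarrow> (\<lambda>k. x k - y k) \<in> l2"
  using l2_lincomb[of x y 1 "-1"] by simp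

lemma l2_scale: "x \<in> l2 \<Longrightarrow> (\<lambda>k. a * x k) \<in> l2"
  using l2_lincomb[of x x a 0] by simp

lemma l2_zero: "(\<lambda>k. 0) \<in> l2"
  by (simp add: mem_l2_iff)

lemma l2_sum:
  assumes "finite I" "\<forall>i\<in>I. v i \<in> l2"
  shows "(\<lambda>k. \<Sum>i\<in>I. c i * v i k) \<in> l2"
  using assms
proof (induction I rule: finite_induct)
  case empty thus ?case by (simp add: l2_zero)
next
  case (insert i I)
  have "(\<lambda>k. c i * v i k + 1 * (\<Sum>i\<in>I. c i * v i k)) \<in> l2"
    using insert by (intro l2_lincomb) auto
  thus ?case using insert by simp
qed

lemma supp_below_l2: "supp_below L x \<Longrightarrow> x \<in> l2"
  unfolding mem_l2_iff supp_below_def by (rule summable_finite[of "{..<L}"]) auto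

lemma supp_below_mono: "supp_below L x \<Longrightarrow> L \<le> L' \<Longrightarrow> supp_below L' x"
  by (simp add: supp_below_def)

lemma supp_below_sum: "supp_below L (\<lambda>m. \<Sum>i\<in>I. c i * v i m)" if "\<forall>i\<in>I. supp_below L (v i)"
  using that by (simp add: supp_below_def)

lemma l2_inner_lincomb_left:
  assumes "x \<in> l2" "y \<in> l2" "z \<in> l2"
  shows "l2_inner (\<lambda>k. a * x k + b * y k) z = a * l2_inner x z + b * l2_inner y z"
proof -
  have "(\<Sum>k. a * (x k * cnj (z k)) + b * (y k * cnj (z k)))
      = a * (\<Sum>k. x k * cnj (z k)) + b * (\<Sum>k. y k * cnj (z k))"
    using summable_l2_inner[OF assms(1,3)] summable_l2_inner[OF assms(2,3)]
    by (subst suminf_add[symmetric]) (auto intro: summable_mult simp: suminf_mult)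
  thus ?thesis by (simp add: l2_inner_def algebra_simps)
qed

lemma l2_inner_commute:
  assumes "x \<in> l2" "y \<in> l2" shows "l2_inner y x = cnj (l2_inner x y)"
proof -
  have "(\<lambda>k. cnj (x k * cnj (y k))) sums cnj (l2_inner x y)"
    unfolding l2_inner_def sums_cnj using summable_l2_inner[OF assms] by (rule summable_sums)
  thus ?thesis
    by (simp add: l2_inner_def sums_unique[symmetric] mult.commute)
qed

lemma l2_inner_lincomb_right:
  assumes "x \<in> l2" "y \<in> l2" "z \<in> l2"
  shows "l2_inner z (\<lambda>k. a * x k + b * y k) = cnj a * l2_inner z x + cnj b * l2_inner z y"
  using l2_inner_commute[OF l2_lincomb[OF assms(1,2)] assms(3)] l2_inner_lincomb_left[OF assms, of a b]
    l2_inner_commute[OF assms(3) assms(1)] l2_inner_commute[OF assms(3) assms(2)]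
  by simp

lemma l2_inner_scale_right: "x \<in> l2 \<Longrightarrow> z \<in> l2 \<Longrightarrow> l2_inner z (\<lambda>k. c * x k) = cnj c * l2_inner z x"
  using l2_inner_lincomb_right[of x x z c 0] by simp

lemma l2_inner_add_left:
  "x \<in> l2 \<Longrightarrow> y \<in> l2 \<Longrightarrow> z \<in> l2 \<Longrightarrow> l2_inner (\<lambda>k. x k + y k) z = l2_inner x z + l2_inner y z"
  using l2_inner_lincomb_left[of x y z 1 1] by simp

lemma l2_inner_diff_left:
  "x \<in> l2 \<Longrightarrow> y \<in> l2 \<Longrightarrow> z \<in> l2 \<Longrightarrow> l2_inner (\<lambda>k. x k - y k) z = l2_inner x z - l2_inner y z"
  using l2_inner_lincomb_left[of x y z 1 "-1"] by simp

lemma l2_inner_diff_right: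
  "x \<in> l2 \<Longrightarrow> y \<in> l2 \<Longrightarrow> z \<in> l2 \<Longrightarrow> l2_inner z (\<lambda>k. x k - y k) = l2_inner z x - l2_inner z y"
  using l2_inner_lincomb_right[of x y z 1 "-1"] by simp

lemma l2_inner_sum_left:
  assumes "finite I" "\<forall>i\<in>I. v i \<in> l2" "z \<in> l2"
  shows "l2_inner (\<lambda>k. \<Sum>i\<in>I. c i * v i k) z = (\<Sum>i\<in>I. c i * l2_inner (v i) z)"
proof -
  have "l2_inner (\<lambda>k. \<Sum>i\<in>I. c i * v i k) z = (\<Sum>k. \<Sum>i\<in>I. c i * (v i k * cnj (z k)))"
    unfolding l2_inner_def by (simp add: sum_distrib_right mult.assoc)
  also have "\<dots> = (\<Sum>i\<in>I. \<Sum>k. c i * (v i k * cnj (z k)))"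
    using assms by (intro suminf_sum summable_mult summable_l2_inner) auto
  also have "\<dots> = (\<Sum>i\<in>I. c i * l2_inner (v i) z)"
    unfolding l2_inner_def using assms by (intro sum.cong refl) (simp add: suminf_mult summable_l2_inner)
  finally show ?thesis .
qed

lemma l2_inner_sum_right:
  assumes "finite I" "\<forall>i\<in>I. v i \<in> l2" "z \<in> l2"
  shows "l2_inner z (\<lambda>k. \<Sum>i\<in>I. c i * v i k) = (\<Sum>i\<in>I. cnj (c i) * l2_inner z (v i))"
proof -
  have "l2_inner z (\<lambda>k. \<Sum>i\<in>I. c i * v i k) = cnj (\<Sum>i\<in>I. c i * l2_inner (v i) z)"
    using l2_inner_commute[OF l2_sum[OF assms(1,2)] assms(3)] l2_inner_sum_left[OF assms] by simp
  also have "\<dots> = (\<Sum>i\<in>I. cnj (c i) * l2_inner z (v i))"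
    using assms l2_inner_commute[of z] by (auto intro!: sum.cong)
  finally show ?thesis .
qed

lemma l2_norm_nonneg: "x \<in> l2 \<Longrightarrow> 0 \<le> l2_norm x"
  unfolding l2_norm_def by (simp add: mem_l2_iff suminf_nonneg)

lemma l2_norm_power2: "x \<in> l2 \<Longrightarrow> (l2_norm x)^2 = (\<Sum>k. (cmod (x k))^2)"
  unfolding l2_norm_def by (simp add: mem_l2_iff suminf_nonneg)

lemma l2_inner_self: assumes "x \<in> l2" shows "l2_inner x x = complex_of_real ((l2_norm x)^2)"
proof -
  have "l2_inner x x = (\<Sum>k. complex_of_real ((cmod (x k))^2))"
    unfolding l2_inner_def complex_norm_square ..
  also have "\<dots> = complex_of_real (\<Sum>k. (cmod (x k))^2)"
    using assms by (simp add: mem_l2_iff suminf_of_real)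
  finally show ?thesis using l2_norm_power2[OF assms] by simp
qed

lemma l2_norm_power2_Re: "x \<in> l2 \<Longrightarrow> (l2_norm x)^2 = Re (l2_inner x x)"
  by (simp add: l2_inner_self)

lemma l2_norm_eq_0: assumes "x \<in> l2" "l2_norm x = 0" shows "x k = 0"
proof -
  have "(\<Sum>k. (cmod (x k))^2) = 0" using l2_norm_power2[OF assms(1)] assms(2) by simp
  hence "\<forall>k. (cmod (x k))^2 = 0"
    using assms(1) by (subst (asm) suminf_eq_zero_iff) (auto simp: mem_l2_iff)
  thus ?thesis by simp
qed

lemma l2_norm_scale: assumes "x \<in> l2" shows "l2_norm (\<lambda>k. c * x k) = cmod c * l2_norm x"
proof -
  have "(\<Sum>k. (cmod (c * x k))^2) = (cmod c)^2 * (\<Sum>k. (cmod (x k))^2)"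
    using assms by (simp add: norm_mult power_mult_distrib suminf_mult mem_l2_iff)
  thus ?thesis
    unfolding l2_norm_def by (simp add: real_sqrt_mult)
qed

lemma l2_norm_supp_below:
  assumes "supp_below L x" shows "(l2_norm x)^2 = (\<Sum>m<L. (cmod (x m))^2)"
proof -
  have "(\<Sum>k. (cmod (x k))^2) = (\<Sum>m<L. (cmod (x m))^2)"
    using assms by (intro suminf_finite) (auto simp: supp_below_def)
  thus ?thesis using l2_norm_power2[OF supp_below_l2[OF assms]] by simp
qed

lemma l2_inner_supp_below_left: "supp_below L x \<Longrightarrow> l2_inner x y = (\<Sum>m<L. x m * cnj (y m))"
  unfolding l2_inner_def supp_below_def by (rule suminf_finite) auto

lemma l2_inner_supp_below_right: "supp_below L y \<Longrightarrow> l2_inner x y = (\<Sum>m<L. x m * cnj (y m))"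
  unfolding l2_inner_def supp_below_def by (rule suminf_finite) auto

lemma l2_inner_disjoint_supp:
  assumes "\<forall>m<L. y m = 0" "supp_below L v"
  shows "l2_inner y v = 0" "l2_inner v y = 0"
  using assms by (auto simp: l2_inner_supp_below_right[OF assms(2)]
      l2_inner_supp_below_left[OF assms(2)] intro!: sum.neutral)

lemma l2_cauchy_schwarz:
  assumes "x \<in> l2" "y \<in> l2"
  shows "cmod (l2_inner x y) \<le> l2_norm x * l2_norm y"
proof -
  have le: "cmod (l2_inner x y) \<le> (\<Sum>k. cmod (x k) * cmod (y k))"
    unfolding l2_inner_def using summable_norm[OF summable_norm_l2_inner[OF assms]] by (simp add: norm_mult)
  have "(\<Sum>k. cmod (x k) * cmod (y k)) \<le> sqrt (\<Sum>k. (cmod (x k))^2) * sqrt (\<Sum>k. (cmod (y k))^2)"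
  proof (rule suminf_le_const)
    show "summable (\<lambda>k. cmod (x k) * cmod (y k))"
      using summable_norm_l2_inner[OF assms] by (simp add: norm_mult)
  next
    fix n
    have "(\<Sum>k<n. cmod (x k) * cmod (y k)) \<le> L2_set (\<lambda>k. cmod (x k)) {..<n} * L2_set (\<lambda>k. cmod (y k)) {..<n}"
      using L2_set_mult_ineq[of "\<lambda>k. cmod (x k)" "\<lambda>k. cmod (y k)" "{..<n}"] by simp
    also have "\<dots> \<le> sqrt (\<Sum>k. (cmod (x k))^2) * sqrt (\<Sum>k. (cmod (y k))^2)"
      unfolding L2_set_def using assms
      by (intro mult_mono real_sqrt_le_mono sum_le_suminf) (auto simp: mem_l2_iff suminf_nonneg sum_nonneg)
    finally show "(\<Sum>k<n. cmod (x k) * cmod (y k)) \<le> sqrt (\<Sum>k. (cmod (x k))^2) * sqrt (\<Sum>k. (cmod (y k))^2)" .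
  qed
  thus ?thesis using le unfolding l2_norm_def by linarith
qed

lemma l2_norm_triangle:
  assumes "x \<in> l2" "y \<in> l2"
  shows "l2_norm (\<lambda>k. x k + y k) \<le> l2_norm x + l2_norm y"
proof -
  have w: "(\<lambda>k. x k + y k) \<in> l2" using assms by (rule l2_add)
  have e: "l2_inner (\<lambda>k. x k + y k) (\<lambda>k. x k + y k) = l2_inner x x + l2_inner x y + l2_inner y x + l2_inner y y"
    using l2_inner_lincomb_left[OF assms w, of 1 1] l2_inner_lincomb_right[OF assms assms(1), of 1 1]
      l2_inner_lincomb_right[OF assms assms(2), of 1 1] by simp
  have "Re (l2_inner x y + l2_inner y x) \<le> 2 * (l2_norm x * l2_norm y)"
  proof -
    have "Re (l2_inner x y) \<le> cmod (l2_inner x y)" by (rule complex_Re_le_cmod)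
    moreover have "Re (l2_inner y x) \<le> cmod (l2_inner y x)" by (rule complex_Re_le_cmod)
    moreover have "l2_norm y * l2_norm x = l2_norm x * l2_norm y" by simp
    moreover have "Re (l2_inner x y + l2_inner y x) = Re (l2_inner x y) + Re (l2_inner y x)" by simp
    ultimately show ?thesis using l2_cauchy_schwarz[OF assms] l2_cauchy_schwarz[OF assms(2,1)] by linarith
  qed
  hence "(l2_norm (\<lambda>k. x k + y k))^2 \<le> (l2_norm x + l2_norm y)^2"
    using e l2_norm_power2_Re[OF w] l2_norm_power2_Re[OF assms(1)] l2_norm_power2_Re[OF assms(2)]
    by (simp add: power2_eq_square algebra_simps)
  moreover have "0 \<le> l2_norm x + l2_norm y" using l2_norm_nonneg[OF assms(1)] l2_norm_nonneg[OF assms(2)] by simp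
  ultimately show ?thesis by (rule power2_le_imp_le)
qed

lemma l2_norm_triangle_diff:
  assumes "x \<in> l2" "y \<in> l2" "z \<in> l2"
  shows "l2_norm (\<lambda>k. x k - z k) \<le> l2_norm (\<lambda>k. x k - y k) + l2_norm (\<lambda>k. y k - z k)"
  using l2_norm_triangle[OF l2_diff[OF assms(1,2)] l2_diff[OF assms(2,3)]] by simp

lemma l2_norm_diff_commute:
  assumes "x \<in> l2" "y \<in> l2" shows "l2_norm (\<lambda>k. x k - y k) = l2_norm (\<lambda>k. y k - x k)"
proof -
  have "l2_norm (\<lambda>k. (-1) * (x k - y k)) = l2_norm (\<lambda>k. x k - y k)"
    by (simp only: l2_norm_scale[OF l2_diff[OF assms]]) simp
  thus ?thesis by simp
qed

lemma bounded_op_l2: "bounded_op T \<Longrightarrow> x \<in> l2 \<Longrightarrow> T x \<in> l2"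
  by (simp add: bounded_op_def)

lemma bounded_op_lincomb:
  "bounded_op T \<Longrightarrow> x \<in> l2 \<Longrightarrow> y \<in> l2 \<Longrightarrow> T (\<lambda>k. a * x k + b * y k) = (\<lambda>k. a * T x k + b * T y k)"
  by (simp add: bounded_op_def)

lemma bounded_op_zero: "bounded_op T \<Longrightarrow> T (\<lambda>k. 0) = (\<lambda>k. 0)"
  using bounded_op_lincomb[of T "\<lambda>k. 0" "\<lambda>k. 0" 0 0] l2_zero by simp

lemma bounded_op_diff:
  "bounded_op T \<Longrightarrow> x \<in> l2 \<Longrightarrow> y \<in> l2 \<Longrightarrow> T (\<lambda>k. x k - y k) = (\<lambda>k. T x k - T y k)"
  using bounded_op_lincomb[of T x y 1 "-1"] by simp

lemma bounded_op_sum: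
  assumes "bounded_op T" "finite I" "\<forall>i\<in>I. v i \<in> l2"
  shows "T (\<lambda>k. \<Sum>i\<in>I. c i * v i k) = (\<lambda>k. \<Sum>i\<in>I. c i * T (v i) k)"
  using assms(2,3)
proof (induction I rule: finite_induct)
  case empty thus ?case using bounded_op_zero[OF assms(1)] by simp
next
  case (insert i I)
  have "T (\<lambda>k. c i * v i k + 1 * (\<Sum>i\<in>I. c i * v i k))
      = (\<lambda>k. c i * T (v i) k + 1 * T (\<lambda>k. \<Sum>i\<in>I. c i * v i k) k)"
    using insert by (intro bounded_op_lincomb assms(1) l2_sum) auto
  thus ?case using insert by simp
qed

lemma bounded_ops_bound:
  fixes T :: "'n::finite \<Rightarrow> (nat \<Rightarrow> complex) \<Rightarrow> (nat \<Rightarrow> complex)"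
  assumes "\<forall>j. bounded_op (T j)"
  shows "\<exists>C\<ge>0. \<forall>j. \<forall>x\<in>l2. l2_norm (T j x) \<le> C * l2_norm x"
proof -
  have "\<forall>j. \<exists>C. \<forall>x\<in>l2. l2_norm (T j x) \<le> C * l2_norm x"
    using assms by (simp add: bounded_op_def)
  then obtain C where C: "\<And>j. \<forall>x\<in>l2. l2_norm (T j x) \<le> C j * l2_norm x"
    by metis
  have "l2_norm (T j x) \<le> (\<Sum>j\<in>UNIV. \<bar>C j\<bar>) * l2_norm x" if "x \<in> l2" for j x
  proof -
    have "C j \<le> (\<Sum>j\<in>UNIV. \<bar>C j\<bar>)"
      using member_le_sum[of j UNIV "\<lambda>j. \<bar>C j\<bar>"] by simp
    thus ?thesis
      using C[of j] that l2_norm_nonneg[OF that] by (meson mult_right_mono order_trans)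
  qed
  thus ?thesis by (intro exI[of _ "\<Sum>j\<in>UNIV. \<bar>C j\<bar>"]) (auto intro: sum_nonneg)
qed

lemma bounded_op_inner_le:
  assumes "bounded_op T" "\<forall>x\<in>l2. l2_norm (T x) \<le> C * l2_norm x" "a \<in> l2" "b \<in> l2"
  shows "cmod (l2_inner (T a) b) \<le> C * l2_norm a * l2_norm b"
  using l2_cauchy_schwarz[OF bounded_op_l2[OF assms(1,3)] assms(4)] assms(2,3)
    mult_right_mono[OF _ l2_norm_nonneg[OF assms(4)]] by (meson order_trans)

definition orthonormal_on :: "'i set \<Rightarrow> ('i \<Rightarrow> nat \<Rightarrow> complex) \<Rightarrow> bool" where
  "orthonormal_on I v \<longleftrightarrow> (\<forall>i\<in>I. v i \<in> l2) \<and>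
     (\<forall>i\<in>I. \<forall>i'\<in>I. l2_inner (v i) (v i') = (if i = i' then 1 else 0))"

lemma orthonormal_seq_on: "orthonormal_seq u \<Longrightarrow> orthonormal_on I u"
  by (simp add: orthonormal_on_def orthonormal_seq_def)

lemma l2_inner_orthonormal_sums:
  assumes "finite I" "orthonormal_on I v"
  shows "l2_inner (\<lambda>k. \<Sum>i\<in>I. a i * v i k) (\<lambda>k. \<Sum>i\<in>I. b i * v i k) = (\<Sum>i\<in>I. a i * cnj (b i))"
proof -
  have l: "\<forall>i\<in>I. v i \<in> l2" using assms by (simp add: orthonormal_on_def)
  have "l2_inner (\<lambda>k. \<Sum>i\<in>I. a i * v i k) (\<lambda>k. \<Sum>i\<in>I. b i * v i k)
      = (\<Sum>i\<in>I. a i * (\<Sum>i'\<in>I. cnj (b i') * l2_inner (v i) (v i')))"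
    using l2_inner_sum_left[OF assms(1) l l2_sum[OF assms(1) l]] l2_inner_sum_right[OF assms(1) l] l
    by simp
  also have "\<dots> = (\<Sum>i\<in>I. a i * cnj (b i))"
  proof (rule sum.cong[OF refl])
    fix i assume i: "i \<in> I"
    have "(\<Sum>i'\<in>I. cnj (b i') * l2_inner (v i) (v i')) = (\<Sum>i'\<in>I. if i = i' then cnj (b i') else 0)"
      using assms(2) i by (intro sum.cong refl) (auto simp: orthonormal_on_def)
    thus "a i * (\<Sum>i'\<in>I. cnj (b i') * l2_inner (v i) (v i')) = a i * cnj (b i)"
      using assms(1) i by simp
  qed
  finally show ?thesis .
qed

lemma l2_norm_orthonormal_sum:
  assumes "finite I" "orthonormal_on I v"
  shows "(l2_norm (\<lambda>k. \<Sum>i\<in>I. a i * v i k))^2 = (\<Sum>i\<in>I. (cmod (a i))^2)"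
proof -
  have "(\<lambda>k. \<Sum>i\<in>I. a i * v i k) \<in> l2"
    using assms by (intro l2_sum) (auto simp: orthonormal_on_def)
  hence "(l2_norm (\<lambda>k. \<Sum>i\<in>I. a i * v i k))^2 = Re (\<Sum>i\<in>I. a i * cnj (a i))"
    using l2_norm_power2_Re l2_inner_orthonormal_sums[OF assms] by simp
  thus ?thesis by (simp add: complex_norm_square[symmetric])
qed

lemma l2_norm_orthonormal: assumes "orthonormal_seq u" shows "l2_norm (u k) = 1"
proof -
  have l: "u k \<in> l2" and "l2_inner (u k) (u k) = 1"
    using assms by (auto simp: orthonormal_seq_def)
  hence "(l2_norm (u k))^2 = 1" using l2_inner_self[OF l] of_real_eq_1_iff by metis
  thus ?thesis using l2_norm_nonneg[OF l] by (simp add: power2_eq_1_iff)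
qed

text \<open>Bessel's inequality: expand \<open>\<parallel>z - \<Sum> \<langle>z, v i\<rangle> v i\<parallel>\<^sup>2 \<ge> 0\<close>.\<close>

lemma bessel_inequality:
  assumes "z \<in> l2" "finite I" "orthonormal_on I v"
  shows "(\<Sum>i\<in>I. (cmod (l2_inner z (v i)))^2) \<le> (l2_norm z)^2"
proof -
  define a where "a i = l2_inner z (v i)" for i
  have l: "\<forall>i\<in>I. v i \<in> l2" using assms by (simp add: orthonormal_on_def)
  define S where "S = (\<lambda>k. \<Sum>i\<in>I. a i * v i k)"
  have s: "S \<in> l2" unfolding S_def using assms l by (intro l2_sum) auto
  have d: "(\<lambda>k. z k - S k) \<in> l2" using assms(1) s by (rule l2_diff)
  have zS: "l2_inner z S = (\<Sum>i\<in>I. cnj (a i) * a i)"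
    unfolding S_def by (simp add: l2_inner_sum_right[OF assms(2) l assms(1)] a_def)
  have Sz: "l2_inner S z = (\<Sum>i\<in>I. cnj (a i) * a i)"
    unfolding S_def using l2_inner_sum_left[OF assms(2) l assms(1)] l assms(1)
    by (auto simp: a_def l2_inner_commute[of z] intro!: sum.cong)
  have SS: "l2_inner S S = (\<Sum>i\<in>I. cnj (a i) * a i)"
    unfolding S_def using l2_inner_orthonormal_sums[OF assms(2,3), of a a] by (simp add: mult.commute)
  have "l2_inner (\<lambda>k. z k - S k) (\<lambda>k. z k - S k) = l2_inner z z - (\<Sum>i\<in>I. cnj (a i) * a i)"
    using l2_inner_diff_left[OF assms(1) s d] l2_inner_diff_right[OF assms(1) s assms(1)]
      l2_inner_diff_right[OF assms(1) s s] zS Sz SS by simp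
  hence "(l2_norm (\<lambda>k. z k - S k))^2 = (l2_norm z)^2 - (\<Sum>i\<in>I. Re (cnj (a i) * a i))"
    using l2_norm_power2_Re[OF d] l2_norm_power2_Re[OF assms(1)] by (simp add: Re_sum)
  moreover have "Re (cnj (a i) * a i) = (cmod (a i))^2" for i
    using cmod_power2[of "a i"] by (simp add: power2_eq_square)
  ultimately show ?thesis
    using zero_le_power2[of "l2_norm (\<lambda>k. z k - S k)"] by (simp add: a_def)
qed

lemma tendsto_0_if_norm_power2_tendsto_0:
  "(\<lambda>k. (cmod (f k))^2) \<longlonglongrightarrow> 0 \<Longrightarrow> f \<longlonglongrightarrow> (0::complex)"
  using tendsto_real_sqrt[of "\<lambda>k. (cmod (f k))^2" 0 sequentially] by (simp add: tendsto_norm_zero_iff)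

lemma orthonormal_seq_weakly_null:
  assumes "orthonormal_seq u" "z \<in> l2"
  shows "(\<lambda>k. l2_inner z (u k)) \<longlonglongrightarrow> 0"
proof -
  have "summable (\<lambda>k. (cmod (l2_inner z (u k)))^2)"
    using bessel_inequality[OF assms(2) _ orthonormal_seq_on[OF assms(1)]]
    by (intro summableI_nonneg_bounded) auto
  thus ?thesis by (intro tendsto_0_if_norm_power2_tendsto_0 summable_LIMSEQ_zero)
qed

lemma orthonormal_seq_coordinate_tendsto_0:
  assumes "orthonormal_seq x" shows "(\<lambda>k. x k m) \<longlonglongrightarrow> 0"
proof -
  define e where "e = (\<lambda>i. if i = m then (1::complex) else 0)"
  have e: "supp_below (Suc m) e" by (simp add: supp_below_def e_def)
  have "l2_inner e (x k) = cnj (x k m)" for k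
    unfolding l2_inner_supp_below_left[OF e] by (simp add: e_def if_distrib cong: if_cong)
  hence "(\<lambda>k. cnj (x k m)) \<longlonglongrightarrow> 0"
    using orthonormal_seq_weakly_null[OF assms supp_below_l2[OF e]] by simp
  from tendsto_cnj[OF this] show ?thesis by simp
qed

lemma infinite_norm_ge_if_not_tendsto_0:
  fixes a :: "nat \<Rightarrow> complex"
  assumes "\<not> a \<longlonglongrightarrow> 0"
  shows "\<exists>e>0. infinite {k. e \<le> cmod (a k)}"
proof -
  obtain e where e: "e > 0" "\<forall>no. \<exists>n\<ge>no. e \<le> cmod (a n)"
    using assms unfolding LIMSEQ_iff by (auto simp: not_less)
  hence "infinite {k. e \<le> cmod (a k)}" by (simp add: infinite_nat_iff_unbounded_le)
  thus ?thesis using e(1) by blast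
qed

text \<open>A compact operator sends orthonormal sequences to null sequences, so its diagonal
  with respect to any orthonormal sequence tends to zero.\<close>

lemma compact_op_diagonal_tendsto_0:
  assumes K: "compact_op K" and u: "orthonormal_seq u"
  shows "(\<lambda>k. l2_inner (K (u k)) (u k)) \<longlonglongrightarrow> 0"
proof (rule ccontr)
  define a where "a k = l2_inner (K (u k)) (u k)" for k
  assume "\<not> (\<lambda>k. l2_inner (K (u k)) (u k)) \<longlonglongrightarrow> 0"
  then obtain e where e: "e > 0" "infinite {k. e \<le> cmod (a k)}"
    using infinite_norm_ge_if_not_tendsto_0 unfolding a_def by blast
  define s where "s = enumerate {k. e \<le> cmod (a k)}"
  have sm: "strict_mono s" and sS: "\<And>i. e \<le> cmod (a (s i))"
    using e(2) strict_mono_enumerate enumerate_in_set unfolding s_def by blast+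
  have ul: "\<And>k. u k \<in> l2" using u by (simp add: orthonormal_seq_def)
  have bop: "bounded_op K" using K by (simp add: compact_op_def)
  have "(\<forall>i. u (s i) \<in> l2) \<and> (\<exists>B. \<forall>i. l2_norm (u (s i)) \<le> B)"
    using ul l2_norm_orthonormal[OF u] by auto
  then obtain r z where r: "strict_mono r" "z \<in> l2"
    "(\<lambda>i. l2_norm (\<lambda>k. K (u (s (r i))) k - z k)) \<longlonglongrightarrow> 0"
    using K[unfolded compact_op_def, THEN conjunct2, rule_format, of "\<lambda>i. u (s i)"] by blast
  have t1: "(\<lambda>i. l2_inner z (u (s (r i)))) \<longlonglongrightarrow> 0"
    using LIMSEQ_subseq_LIMSEQ[OF orthonormal_seq_weakly_null[OF u r(2)] strict_mono_o[OF sm r(1)]]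
    by (simp add: o_def)
  have eq: "a (s (r i)) = l2_inner (\<lambda>k. K (u (s (r i))) k - z k) (u (s (r i))) + l2_inner z (u (s (r i)))" for i
    using l2_inner_diff_left[OF bounded_op_l2[OF bop ul] r(2) ul] by (simp add: a_def)
  have "cmod (l2_inner (\<lambda>k. K (u (s (r i))) k - z k) (u (s (r i)))) \<le> l2_norm (\<lambda>k. K (u (s (r i))) k - z k)" for i
    using l2_cauchy_schwarz[OF l2_diff[OF bounded_op_l2[OF bop ul] r(2)] ul] l2_norm_orthonormal[OF u] by simp
  hence t2: "(\<lambda>i. l2_inner (\<lambda>k. K (u (s (r i))) k - z k) (u (s (r i)))) \<longlonglongrightarrow> 0"
    by (intro Lim_null_comparison[OF _ r(3)] always_eventually allI)
  have "(\<lambda>i. cmod (a (s (r i)))) \<longlonglongrightarrow> 0"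
    unfolding eq using tendsto_add[OF t2 t1] by (simp add: tendsto_norm_zero_iff)
  hence "e \<le> 0" using sS by (intro LIMSEQ_le_const) auto
  thus False using e(1) by simp
qed

lemma le_square_if_le_mul_sqrt:
  fixes e D :: real
  assumes "e > 0" "n > 0" "n * e \<le> D * sqrt n"
  shows "n \<le> (D / e)^2"
proof -
  have "sqrt n * sqrt n = n" using assms(2) by simp
  hence "sqrt n * (sqrt n * e) \<le> sqrt n * D" using assms(3) by (metis mult.assoc mult.commute)
  hence "sqrt n * e \<le> D" using assms(2) by (simp add: mult_le_cancel_left_pos)
  hence "(sqrt n * e)^2 \<le> D^2" using assms(1,2) by (intro power_mono) auto
  thus ?thesis using assms(1,2) by (simp add: power_mult_distrib field_simps power_divide)
qed

text \<open>Testing \<open>T\<close> against a unimodular combination \<open>s\<close> of \<open>M\<close> of the vectors \<open>x k\<close> with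
  \<open>\<bar>\<langle>T (x k), z\<rangle>\<bar> \<ge> e\<close> gives \<open>M e \<le> \<bar>\<langle>T s, z\<rangle>\<bar> \<le> C \<surd>M \<parallel>z\<parallel>\<close>, impossible for large \<open>M\<close>.\<close>

lemma bounded_op_orthonormal_weakly_null:
  assumes T: "bounded_op T" and x: "orthonormal_seq x" and z: "z \<in> l2"
  shows "(\<lambda>k. l2_inner (T (x k)) z) \<longlonglongrightarrow> 0"
proof (rule ccontr)
  define phi where "phi k = l2_inner (T (x k)) z" for k
  assume "\<not> (\<lambda>k. l2_inner (T (x k)) z) \<longlonglongrightarrow> 0"
  then obtain e where e: "e > 0" "infinite {k. e \<le> cmod (phi k)}"
    using infinite_norm_ge_if_not_tendsto_0 unfolding phi_def by blast
  obtain C where C: "\<forall>x\<in>l2. l2_norm (T x) \<le> C * l2_norm x"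
    using T by (auto simp: bounded_op_def)
  define D where "D = C * l2_norm z"
  define M where "M = nat \<lceil>(D/e)^2\<rceil> + 1"
  have M_pos: "M > 0" unfolding M_def by simp
  obtain F where F: "finite F" "card F = M" "F \<subseteq> {k. e \<le> cmod (phi k)}"
    using infinite_arbitrarily_large[OF e(2)] by blast
  have xl: "\<And>k. x k \<in> l2" using x by (simp add: orthonormal_seq_def)
  define w where "w k = cnj (phi k) / cmod (phi k)" for k
  have pos: "k \<in> F \<Longrightarrow> cmod (phi k) > 0" for k using F(3) e(1) by force
  have wphi: "w k * phi k = cmod (phi k)" if "k \<in> F" for k
  proof -
    have "w k * phi k = complex_of_real ((cmod (phi k))^2) / complex_of_real (cmod (phi k))"
      unfolding w_def using complex_norm_square[of "phi k"] by (simp add: mult.commute)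
    thus ?thesis using pos[OF that] by (simp add: power2_eq_square)
  qed
  have wn: "cmod (w k) = 1" if "k \<in> F" for k
    unfolding w_def using pos[OF that] by (simp add: norm_divide)
  define s where "s = (\<lambda>m. \<Sum>k\<in>F. w k * x k m)"
  have sl: "s \<in> l2" unfolding s_def using F(1) xl by (intro l2_sum) auto
  have "T s = (\<lambda>m. \<Sum>k\<in>F. w k * T (x k) m)"
    unfolding s_def using bounded_op_sum[OF T F(1)] xl by simp
  hence "l2_inner (T s) z = (\<Sum>k\<in>F. w k * phi k)"
    unfolding phi_def using l2_inner_sum_left[OF F(1) _ z, of "\<lambda>k. T (x k)"] bounded_op_l2[OF T xl] by simp
  also have "\<dots> = of_real (\<Sum>k\<in>F. cmod (phi k))" using wphi by simp
  finally have "cmod (l2_inner (T s) z) = (\<Sum>k\<in>F. cmod (phi k))"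
    by (simp only: norm_of_real) (simp add: sum_nonneg)
  moreover have "M * e \<le> (\<Sum>k\<in>F. cmod (phi k))"
    using sum_mono[of F "\<lambda>_. e" "\<lambda>k. cmod (phi k)"] F by auto
  moreover have "cmod (l2_inner (T s) z) \<le> D * l2_norm s"
    using bounded_op_inner_le[OF T C sl z] by (simp add: D_def mult_ac)
  moreover have "l2_norm s = sqrt M"
    using l2_norm_orthonormal_sum[OF F(1) orthonormal_seq_on[OF x], of w] wn F(2) l2_norm_nonneg[OF sl]
    unfolding s_def by (simp add: real_sqrt_unique)
  ultimately have "M * e \<le> D * sqrt M" by simp
  hence "M \<le> (D/e)^2" using le_square_if_le_mul_sqrt[OF e(1), of "real M"] M_pos by simp
  moreover have "(D/e)^2 < M" unfolding M_def by linarith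
  ultimately show False by linarith
qed

lemma D_const_compact_perturbation_subset:
  fixes T K :: "'n::finite \<Rightarrow> (nat \<Rightarrow> complex) \<Rightarrow> (nat \<Rightarrow> complex)"
  assumes T: "\<forall>j. bounded_op (T j)" and K: "\<forall>j. compact_op (K j)"
  shows "D_const (\<lambda>j x. (\<lambda>k. T j x k + K j x k)) \<subseteq> ess_num_range T"
proof
  fix lam assume "lam \<in> D_const (\<lambda>j x. (\<lambda>k. T j x k + K j x k))"
  then obtain u where u: "orthonormal_basis u"
    "\<forall>k j. l2_inner (\<lambda>m. T j (u k) m + K j (u k) m) (u k) = lam $ j"
    by (auto simp: D_const_def)
  have us: "orthonormal_seq u" using u by (simp add: orthonormal_basis_def)
  have ul: "\<And>k. u k \<in> l2" using us by (simp add: orthonormal_seq_def)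
  have "l2_inner (T j (u k)) (u k) = lam $ j - l2_inner (K j (u k)) (u k)" for j k
    using u(2) l2_inner_add_left[OF bounded_op_l2[OF T[rule_format] ul]
        bounded_op_l2[OF compact_op_def[THEN iffD1, OF K[rule_format], THEN conjunct1] ul] ul]
    by (metis add_diff_cancel_right')
  hence "(\<lambda>k. l2_inner (T j (u k)) (u k)) \<longlonglongrightarrow> lam $ j" for j
    using tendsto_diff[OF tendsto_const compact_op_diagonal_tendsto_0[OF K[rule_format] us]] by simp
  thus "lam \<in> ess_num_range T" using us by (auto simp: ess_num_range_def)
qed

section \<open>Approximating vectors from the essential numerical range\<close>

lemma bounded_op_inner_perturb:
  assumes T: "bounded_op T" "\<forall>x\<in>l2. l2_norm (T x) \<le> C * l2_norm x" "C \<ge> 0"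
    and l2: "a \<in> l2" "b \<in> l2" "z \<in> l2"
  shows "cmod (l2_inner (T a) z - l2_inner (T b) z) \<le> C * l2_norm (\<lambda>k. a k - b k) * l2_norm z"
    and "cmod (l2_inner (T z) a - l2_inner (T z) b) \<le> C * l2_norm z * l2_norm (\<lambda>k. a k - b k)"
    and "cmod (l2_inner (T a) a - l2_inner (T b) b)
         \<le> C * l2_norm (\<lambda>k. a k - b k) * (l2_norm a + l2_norm b)"
proof -
  define d where "d = (\<lambda>k. a k - b k)"
  have d: "d \<in> l2" unfolding d_def using l2(1,2) by (rule l2_diff)
  have left: "l2_inner (T a) w - l2_inner (T b) w = l2_inner (T d) w" if "w \<in> l2" for w
    unfolding d_def bounded_op_diff[OF T(1) l2(1,2)]
    using l2_inner_diff_left[OF bounded_op_l2[OF T(1) l2(1)] bounded_op_l2[OF T(1) l2(2)] that] by simp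
  have right: "l2_inner (T w) a - l2_inner (T w) b = l2_inner (T w) d" if "w \<in> l2" for w
    unfolding d_def using l2_inner_diff_right[OF l2(1,2) bounded_op_l2[OF T(1) that]] by simp
  have 1: "cmod (l2_inner (T a) w - l2_inner (T b) w) \<le> C * l2_norm d * l2_norm w" if "w \<in> l2" for w
    unfolding left[OF that] by (rule bounded_op_inner_le[OF T(1,2) d that])
  have 2: "cmod (l2_inner (T w) a - l2_inner (T w) b) \<le> C * l2_norm w * l2_norm d" if "w \<in> l2" for w
    unfolding right[OF that] by (rule bounded_op_inner_le[OF T(1,2) that d])
  show "cmod (l2_inner (T a) z - l2_inner (T b) z) \<le> C * l2_norm (\<lambda>k. a k - b k) * l2_norm z"
    using 1[OF l2(3)] by (simp add: d_def)
  show "cmod (l2_inner (T z) a - l2_inner (T z) b) \<le> C * l2_norm z * l2_norm (\<lambda>k. a k - b k)"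
    using 2[OF l2(3)] by (simp add: d_def)
  have "cmod (l2_inner (T a) a - l2_inner (T b) b)
      \<le> cmod (l2_inner (T a) a - l2_inner (T b) a) + cmod (l2_inner (T b) a - l2_inner (T b) b)"
    using norm_triangle_ineq[of "l2_inner (T a) a - l2_inner (T b) a" "l2_inner (T b) a - l2_inner (T b) b"]
    by simp
  also have "\<dots> \<le> C * l2_norm d * l2_norm a + C * l2_norm b * l2_norm d"
    using 1[OF l2(1)] 2[OF l2(2)] by (rule add_mono)
  finally show "cmod (l2_inner (T a) a - l2_inner (T b) b)
      \<le> C * l2_norm (\<lambda>k. a k - b k) * (l2_norm a + l2_norm b)"
    by (simp add: d_def algebra_simps)
qed

lemma summable_tail_le:
  assumes "summable (f::nat \<Rightarrow> real)" "e > 0"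
  shows "\<exists>R\<ge>L. suminf f - (\<Sum>m<R. f m) \<le> e"
proof -
  obtain N where N: "\<forall>n\<ge>N. norm ((\<Sum>m<n. f m) - suminf f) < e"
    using summable_LIMSEQ[OF assms(1)] assms(2) unfolding LIMSEQ_iff by blast
  hence "norm ((\<Sum>m<max N L. f m) - suminf f) < e" by simp
  thus ?thesis by (intro exI[of _ "max N L"]) auto
qed

lemma l2_truncation:
  assumes x: "x \<in> l2" and head: "(\<Sum>m<L. (cmod (x m))^2) \<le> \<eta>^2 / 2" and \<eta>: "\<eta> > 0"
  shows "\<exists>R. l2_norm (\<lambda>m. x m - (if L \<le> m \<and> m < R then x m else 0)) \<le> \<eta>"
proof -
  have sx: "summable (\<lambda>m. (cmod (x m))^2)" using x by (simp add: mem_l2_iff)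
  obtain R where R: "R \<ge> L" "(\<Sum>m. (cmod (x m))^2) - (\<Sum>m<R. (cmod (x m))^2) \<le> \<eta>^2 / 2"
    using summable_tail_le[OF sx, of "\<eta>^2 / 2" L] \<eta> by auto
  define p where "p = (\<lambda>m. if L \<le> m \<and> m < R then x m else 0)"
  define d where "d = (\<lambda>m. x m - p m)"
  have p: "supp_below R p" unfolding supp_below_def p_def by auto
  have dl: "d \<in> l2" unfolding d_def using x supp_below_l2[OF p] by (rule l2_diff)
  have "(l2_norm p)^2 = (\<Sum>m<R. if L \<le> m then (cmod (x m))^2 else 0)"
    unfolding l2_norm_supp_below[OF p] by (intro sum.cong) (auto simp: p_def)
  also have "\<dots> = (\<Sum>m\<in>{L..<R}. (cmod (x m))^2)"
    by (subst sum.If_cases) (auto intro!: sum.cong)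
  also have "\<dots> = (\<Sum>m<R. (cmod (x m))^2) - (\<Sum>m<L. (cmod (x m))^2)"
    using R(1) by (simp add: sum_diff_nat_ivl lessThan_atLeast0)
  finally have np: "(l2_norm p)^2 = (\<Sum>m<R. (cmod (x m))^2) - (\<Sum>m<L. (cmod (x m))^2)" .
  have pointwise: "(cmod (x m))^2 = (cmod (p m))^2 + (cmod (d m))^2" for m
    by (simp add: p_def d_def)
  have "(\<Sum>m. (cmod (x m))^2) = (\<Sum>m. (cmod (p m))^2) + (\<Sum>m. (cmod (d m))^2)"
    unfolding pointwise using supp_below_l2[OF p] dl by (intro suminf_add[symmetric]) (auto simp: mem_l2_iff)
  hence "(l2_norm d)^2 \<le> \<eta>^2"
    using l2_norm_power2[OF x] l2_norm_power2[OF supp_below_l2[OF p]] l2_norm_power2[OF dl] np R(2) head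
    by linarith
  hence "l2_norm d \<le> \<eta>" by (rule power2_le_imp_le) (use \<eta> in simp)
  thus ?thesis unfolding d_def p_def by (rule exI)
qed

lemma l2_normalize_close:
  assumes x: "x \<in> l2" "l2_norm x = 1" and p: "p \<in> l2" and d: "l2_norm (\<lambda>m. x m - p m) \<le> \<eta>"
    and \<eta>: "\<eta> < 1"
  defines "y \<equiv> (\<lambda>m. complex_of_real (1 / l2_norm p) * p m)"
  shows "y \<in> l2" "l2_norm y = 1" "l2_norm (\<lambda>m. y m - x m) \<le> 2 * \<eta>"
proof -
  have "1 \<le> l2_norm p + l2_norm (\<lambda>m. x m - p m)"
    using l2_norm_triangle[OF p l2_diff[OF x(1) p]] x(2) by simp
  moreover have "l2_norm p \<le> l2_norm (\<lambda>m. x m - p m) + 1"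
    using l2_norm_triangle_diff[OF p x(1) l2_zero] l2_norm_diff_commute[OF x(1) p] x(2) by simp
  ultimately have close: "\<bar>1 - l2_norm p\<bar> \<le> \<eta>" using d by linarith
  hence pos: "l2_norm p > 0" using \<eta> by linarith
  show y: "y \<in> l2" unfolding y_def using p by (rule l2_scale)
  show "l2_norm y = 1"
    unfolding y_def using l2_norm_scale[OF p, of "complex_of_real (1 / l2_norm p)"] pos by (simp add: norm_divide)
  have "(\<lambda>m. y m - p m) = (\<lambda>m. complex_of_real (1 / l2_norm p - 1) * p m)"
    by (auto simp: y_def algebra_simps)
  hence "l2_norm (\<lambda>m. y m - p m) = \<bar>1 / l2_norm p - 1\<bar> * l2_norm p"
    by (simp only: l2_norm_scale[OF p] norm_of_real)
  also have "\<dots> = \<bar>(1 / l2_norm p - 1) * l2_norm p\<bar>" using pos by (simp add: abs_mult_pos)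
  also have "\<dots> = \<bar>1 - l2_norm p\<bar>" using pos by (simp add: algebra_simps)
  finally show "l2_norm (\<lambda>m. y m - x m) \<le> 2 * \<eta>"
    using l2_norm_triangle_diff[OF y p x(1)] l2_norm_diff_commute[OF x(1) p] d close by simp
qed

lemma unit_vector_truncation:
  assumes x: "x \<in> l2" "l2_norm x = 1" and head: "(\<Sum>m<L. (cmod (x m))^2) \<le> \<eta>^2 / 2"
    and \<eta>: "\<eta> > 0" "\<eta> < 1"
  shows "\<exists>y R. supp_below R y \<and> (\<forall>m<L. y m = 0) \<and> y \<in> l2 \<and> l2_norm y = 1 \<and>
    l2_norm (\<lambda>m. y m - x m) \<le> 2 * \<eta>"
proof -
  obtain R where R: "l2_norm (\<lambda>m. x m - (if L \<le> m \<and> m < R then x m else 0)) \<le> \<eta>"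
    using l2_truncation[OF x(1) head \<eta>(1)] by blast
  define p where "p = (\<lambda>m. if L \<le> m \<and> m < R then x m else 0)"
  have p: "supp_below R p" unfolding supp_below_def p_def by auto
  define y where "y = (\<lambda>m. complex_of_real (1 / l2_norm p) * p m)"
  have "y \<in> l2 \<and> l2_norm y = 1 \<and> l2_norm (\<lambda>m. y m - x m) \<le> 2 * \<eta>"
    using l2_normalize_close[OF x supp_below_l2[OF p] _ \<eta>(2)] R unfolding y_def p_def by auto
  moreover have "supp_below R y" "\<forall>m<L. y m = 0" using p by (simp_all add: y_def p_def supp_below_def)
  ultimately show ?thesis by blast
qed

lemma eventually_approximating_element:
  fixes T :: "'n::finite \<Rightarrow> (nat \<Rightarrow> complex) \<Rightarrow> (nat \<Rightarrow> complex)"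
  assumes T: "\<forall>j. bounded_op (T j)" and x: "orthonormal_seq x"
    and lim: "\<forall>j. (\<lambda>k. l2_inner (T j (x k)) (x k)) \<longlonglongrightarrow> lam $ j"
    and \<eta>: "\<eta> > 0" and Z: "finite Z" "Z \<subseteq> l2"
  shows "\<forall>\<^sub>F k in sequentially. (\<forall>j. cmod (l2_inner (T j (x k)) (x k) - lam $ j) < \<eta>) \<and>
     (\<forall>j. \<forall>z\<in>Z. cmod (l2_inner (T j (x k)) z) < \<eta> \<and> cmod (l2_inner (T j z) (x k)) < \<eta>) \<and>
     (\<Sum>m<L. (cmod (x k m))^2) < \<eta>^2 / 2"
proof (intro eventually_conj)
  show "\<forall>\<^sub>F k in sequentially. \<forall>j. cmod (l2_inner (T j (x k)) (x k) - lam $ j) < \<eta>"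
    using lim \<eta> by (intro eventually_all_finite) (auto dest!: tendstoD simp: dist_norm)
  have "\<forall>\<^sub>F k in sequentially. cmod (l2_inner (T j (x k)) z) < \<eta> \<and> cmod (l2_inner (T j z) (x k)) < \<eta>"
    if "z \<in> Z" for j z
  proof -
    have z: "z \<in> l2" using that Z(2) by blast
    show ?thesis
      using tendstoD[OF bounded_op_orthonormal_weakly_null[OF T[rule_format] x z, of j] \<eta>]
        tendstoD[OF orthonormal_seq_weakly_null[OF x bounded_op_l2[OF T[rule_format] z]] \<eta>]
      by (simp add: dist_norm eventually_conj)
  qed
  thus "\<forall>\<^sub>F k in sequentially. \<forall>j. \<forall>z\<in>Z.
      cmod (l2_inner (T j (x k)) z) < \<eta> \<and> cmod (l2_inner (T j z) (x k)) < \<eta>"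
    by (intro eventually_all_finite allI eventually_ball_finite[OF Z(1)] ballI)
  have "(\<lambda>k. \<Sum>m<L. (cmod (x k m))^2) \<longlonglongrightarrow> (\<Sum>m<L. (cmod (0::complex))^2)"
    by (intro tendsto_sum tendsto_power tendsto_norm orthonormal_seq_coordinate_tendsto_0[OF x])
  thus "\<forall>\<^sub>F k in sequentially. (\<Sum>m<L. (cmod (x k m))^2) < \<eta>^2 / 2"
    using \<eta> by (auto dest!: tendstoD[of _ _ _ "\<eta>^2 / 2"] simp: dist_real_def elim!: eventually_mono)
qed

text \<open>A unit vector supported in a finite window \<open>[L, R)\<close> whose diagonal values approximate
  \<open>lam\<close> and which is almost orthogonal to \<open>T j z\<close> and \<open>T j\<^sup>* z\<close> for the finitely many given \<open>z\<close>:
  truncate and renormalise a late member of the sequence witnessing \<open>lam\<close>.\<close>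

lemma exists_approximating_vector:
  fixes T :: "'n::finite \<Rightarrow> (nat \<Rightarrow> complex) \<Rightarrow> (nat \<Rightarrow> complex)"
  assumes T: "\<forall>j. bounded_op (T j)" and x: "orthonormal_seq x"
    and lim: "\<forall>j. (\<lambda>k. l2_inner (T j (x k)) (x k)) \<longlonglongrightarrow> lam $ j"
    and \<epsilon>: "\<epsilon> > 0" and Z: "finite Z" "Z \<subseteq> l2"
  shows "\<exists>y R. supp_below R y \<and> (\<forall>m<L. y m = 0) \<and> l2_norm y = 1 \<and>
     (\<forall>j. cmod (l2_inner (T j y) y - lam $ j) \<le> \<epsilon>) \<and>
     (\<forall>j. \<forall>z\<in>Z. cmod (l2_inner (T j y) z) \<le> \<epsilon> \<and> cmod (l2_inner (T j z) y) \<le> \<epsilon>)"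
proof -
  obtain C where C: "C \<ge> 0" "\<forall>j. \<forall>x\<in>l2. l2_norm (T j x) \<le> C * l2_norm x"
    using bounded_ops_bound[OF T] by blast
  define B where "B = (\<Sum>z\<in>Z. l2_norm z)"
  have B: "l2_norm z \<le> B" if "z \<in> Z" for z
    unfolding B_def using Z that by (intro member_le_sum l2_norm_nonneg) auto
  have B0: "B \<ge> 0" unfolding B_def using Z by (intro sum_nonneg l2_norm_nonneg) auto
  define \<eta> where "\<eta> = min (1/2) (\<epsilon> / (1 + 4*C + 2*C*B))"
  have \<eta>: "\<eta> > 0" "\<eta> < 1" "\<eta> * (1 + 4*C + 2*C*B) \<le> \<epsilon>"
    using \<epsilon> C(1) B0 by (auto simp: \<eta>_def min_mult_distrib_right pos_le_divide_eq add_pos_nonneg)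
  obtain k where k: "\<forall>j. cmod (l2_inner (T j (x k)) (x k) - lam $ j) < \<eta>"
    "\<forall>j. \<forall>z\<in>Z. cmod (l2_inner (T j (x k)) z) < \<eta> \<and> cmod (l2_inner (T j z) (x k)) < \<eta>"
    "(\<Sum>m<L. (cmod (x k m))^2) < \<eta>^2 / 2"
    using eventually_happens'[OF trivial_limit_sequentially
        eventually_approximating_element[OF T x lim \<eta>(1) Z, of L]] by blast
  have xk: "x k \<in> l2" "l2_norm (x k) = 1"
    using x l2_norm_orthonormal[OF x] by (auto simp: orthonormal_seq_def)
  obtain y R where y: "supp_below R y" "\<forall>m<L. y m = 0" "y \<in> l2" "l2_norm y = 1"
    "l2_norm (\<lambda>m. y m - x k m) \<le> 2 * \<eta>"
    using unit_vector_truncation[OF xk less_imp_le[OF k(3)] \<eta>(1,2)] by (elim exE conjE) (rule that)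
  have d: "C * l2_norm (\<lambda>m. y m - x k m) \<le> C * (2 * \<eta>)"
    using y(5) C(1) by (rule mult_left_mono)
  have budget: "\<eta> + C * (2 * \<eta>) * 2 \<le> \<epsilon>" "\<eta> + C * (2 * \<eta>) * B \<le> \<epsilon>"
  proof -
    have "0 \<le> C * \<eta>" "0 \<le> C * B * \<eta>" using C(1) B0 \<eta>(1) by simp_all
    moreover have "\<eta> * (1 + 4*C + 2*C*B) = \<eta> + 4 * (C * \<eta>) + 2 * (C * B * \<eta>)"
      by (simp add: algebra_simps)
    ultimately show "\<eta> + C * (2 * \<eta>) * 2 \<le> \<epsilon>" "\<eta> + C * (2 * \<eta>) * B \<le> \<epsilon>"
      using \<eta>(3) by (simp_all add: algebra_simps)
  qed
  show ?thesis
  proof (intro exI conjI)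
    show "supp_below R y" "\<forall>m<L. y m = 0" "l2_norm y = 1" using y(1,2,4) by blast+
  next
    show "\<forall>j. cmod (l2_inner (T j y) y - lam $ j) \<le> \<epsilon>"
    proof
      fix j
      note perturb = bounded_op_inner_perturb[OF T[rule_format] spec[OF C(2), of j] C(1) y(3) xk(1)]
      have "cmod (l2_inner (T j y) y - l2_inner (T j (x k)) (x k)) \<le> C * (2 * \<eta>) * 2"
        using perturb(3)[OF y(3)] mult_right_mono[OF d, of 2] y(4) xk(2) by simp
      thus "cmod (l2_inner (T j y) y - lam $ j) \<le> \<epsilon>"
        using norm_triangle_ineq[of "l2_inner (T j y) y - l2_inner (T j (x k)) (x k)"
            "l2_inner (T j (x k)) (x k) - lam $ j"] k(1)[rule_format, of j] budget(1)
        by simp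
    qed
  next
    show "\<forall>j. \<forall>z\<in>Z. cmod (l2_inner (T j y) z) \<le> \<epsilon> \<and> cmod (l2_inner (T j z) y) \<le> \<epsilon>"
    proof (intro allI ballI)
      fix j z assume z: "z \<in> Z"
      note perturb = bounded_op_inner_perturb[OF T[rule_format] spec[OF C(2), of j] C(1) y(3) xk(1)]
      have zl: "z \<in> l2" using z Z(2) by blast
      have kz: "cmod (l2_inner (T j (x k)) z) < \<eta>" "cmod (l2_inner (T j z) (x k)) < \<eta>"
        using k(2) z by auto
      have dz: "C * l2_norm (\<lambda>m. y m - x k m) * l2_norm z \<le> C * (2 * \<eta>) * B"
        using mult_mono[OF d B[OF z]] C(1) \<eta>(1) l2_norm_nonneg[OF zl] by simp
      show "cmod (l2_inner (T j y) z) \<le> \<epsilon> \<and> cmod (l2_inner (T j z) y) \<le> \<epsilon>"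
        using norm_triangle_sub[of "l2_inner (T j y) z" "l2_inner (T j (x k)) z"]
          norm_triangle_sub[of "l2_inner (T j z) y" "l2_inner (T j z) (x k)"]
          perturb(1,2)[OF zl] dz kz budget(2) by (simp add: mult_ac)
    qed
  qed
qed


section \<open>Mixing with a Householder reflection\<close>

text \<open>\<open>householder M\<close> is the reflection of \<open>\<real>\<^sup>M\<close> in the hyperplane orthogonal to
  \<open>v = e\<^sub>0 - (1/\<surd>M, \<dots>, 1/\<surd>M)\<close>, i.e. \<open>I - 2 v v\<^sup>T / \<parallel>v\<parallel>\<^sup>2\<close> with \<open>\<parallel>v\<parallel>\<^sup>2 = 2 (1 - 1/\<surd>M)\<close>.
  It is a symmetric orthogonal matrix exchanging \<open>e\<^sub>0\<close> and the constant unit vector, so its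
  \<open>0\<close>-th column is constant.\<close>

definition householder_vector :: "nat \<Rightarrow> nat \<Rightarrow> real" where
  "householder_vector M b = (if b = 0 then 1 else 0) - 1 / sqrt M"

definition householder :: "nat \<Rightarrow> nat \<Rightarrow> nat \<Rightarrow> real" where
  "householder M a b =
     (if a = b then 1 else 0) - householder_vector M a * householder_vector M b / (1 - 1 / sqrt M)"

lemma inv_sqrt_facts:
  assumes "M \<ge> (2::nat)"
  shows "0 < 1 / sqrt M" "1 / sqrt M < 1" "(1 / sqrt M)^2 = 1 / M" "M * (1 / sqrt M)^2 = 1"
proof -
  have "sqrt M > 1" using assms by simp
  thus "0 < 1 / sqrt M" "1 / sqrt M < 1" by auto
  show "(1 / sqrt M)^2 = 1 / M" by (simp add: power_divide)
  thus "M * (1 / sqrt M)^2 = 1" using assms by simp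
qed

lemma householder_vector_norm:
  assumes "M \<ge> 2" shows "(\<Sum>b<M. (householder_vector M b)^2) = 2 * (1 - 1 / sqrt M)"
proof -
  define r where "r = 1 / sqrt M"
  obtain n where n: "M = Suc n" using assms by (cases M) auto
  have "(\<Sum>b<M. (householder_vector M b)^2)
      = (householder_vector M 0)^2 + (\<Sum>b<n. (householder_vector M (Suc b))^2)"
    unfolding n by (rule sum.lessThan_Suc_shift)
  also have "\<dots> = (1 - r)^2 + n * r^2" by (simp add: householder_vector_def r_def)
  also have "\<dots> = 1 - 2 * r + M * r^2" unfolding n by (simp add: power2_eq_square algebra_simps)
  also have "M * r^2 = 1" unfolding r_def using inv_sqrt_facts[OF assms] by simp
  finally show ?thesis by (simp add: r_def)
qed

lemma householder_orthogonal:
  assumes M: "M \<ge> 2" and a: "a < M" and a': "a' < M"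
  shows "(\<Sum>b<M. householder M a b * householder M a' b) = (if a = a' then 1 else 0)"
proof -
  define v where "v = householder_vector M"
  define r where "r = 1 / sqrt M"
  define t where "t = 1 / (1 - r)"
  have r: "r < 1" using inv_sqrt_facts[OF M] by (simp add: r_def)
  have pw: "householder M a b * householder M a' b
      = (if a = b \<and> a' = b then 1 else 0) - t * v a' * (if a = b then v b else 0)
        - t * v a * (if a' = b then v b else 0) + t^2 * v a * v a' * (v b)^2" for b
    by (auto simp: householder_def v_def t_def r_def power2_eq_square divide_inverse algebra_simps)
  have "(\<Sum>b<M. (if a = b \<and> a' = b then 1 else 0)) = (if a = a' then (1::real) else 0)"
    using a by (cases "a = a'") (auto simp: sum.delta intro!: sum.neutral)
  hence "(\<Sum>b<M. householder M a b * householder M a' b)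
      = (if a = a' then 1 else 0) - 2 * t * v a * v a' + t^2 * v a * v a' * (\<Sum>b<M. (v b)^2)"
    unfolding pw using a a' by (simp add: sum.distrib sum_subtractf sum_distrib_left[symmetric] sum.delta)
  also have "(\<Sum>b<M. (v b)^2) = 2 * (1 - r)" unfolding v_def r_def by (rule householder_vector_norm[OF M])
  also have "t^2 * v a * v a' * (2 * (1 - r)) = (t * (1 - r)) * (2 * t * v a * v a')"
    by (simp add: power2_eq_square algebra_simps)
  also have "t * (1 - r) = 1" using r by (simp add: t_def)
  finally show ?thesis by simp
qed

lemma householder_sym: "householder M a b = householder M b a"
  by (simp add: householder_def mult.commute eq_commute)

lemma householder_first_column:
  assumes M: "M \<ge> 2" shows "householder M a 0 = 1 / sqrt M"
proof -
  define r where "r = 1 / sqrt M"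
  have r: "r < 1" "0 < r" unfolding r_def using inv_sqrt_facts[OF M] by auto
  show ?thesis
    using r by (cases "a = 0")
      (simp_all add: householder_def householder_vector_def r_def[symmetric] power2_eq_square field_simps)
qed

lemma householder_abs_le_1:
  assumes M: "M \<ge> 2" "a < M" "b < M" shows "\<bar>householder M a b\<bar> \<le> 1"
proof -
  have "(householder M a b)^2 \<le> (\<Sum>b<M. (householder M a b)^2)"
    using M by (intro member_le_sum) auto
  also have "\<dots> = 1" using householder_orthogonal[OF M(1,2,2)] by (simp add: power2_eq_square)
  finally show ?thesis by (simp add: abs_square_le_1)
qed

lemma householder_mix:
  fixes z :: "nat \<Rightarrow> nat \<Rightarrow> complex"
  assumes M: "M \<ge> 2" and z: "orthonormal_on {..<M} z"
  defines "w \<equiv> \<lambda>a m. \<Sum>b<M. complex_of_real (householder M a b) * z b m"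
  shows "orthonormal_on {..<M} w" "(\<lambda>m. \<Sum>a<M. complex_of_real (1 / sqrt M) * w a m) = z 0"
proof -
  have zl: "\<forall>b\<in>{..<M}. z b \<in> l2" using z by (simp add: orthonormal_on_def)
  have "l2_inner (w a) (w a') = (if a = a' then 1 else 0)" if "a < M" "a' < M" for a a'
  proof -
    have "l2_inner (w a) (w a')
        = (\<Sum>b<M. complex_of_real (householder M a b) * cnj (complex_of_real (householder M a' b)))"
      unfolding w_def by (rule l2_inner_orthonormal_sums[OF finite_lessThan z])
    also have "\<dots> = complex_of_real (\<Sum>b<M. householder M a b * householder M a' b)" by simp
    finally show ?thesis using householder_orthogonal[OF M that] by simp
  qed
  thus "orthonormal_on {..<M} w"
    using zl unfolding w_def orthonormal_on_def by (auto intro: l2_sum)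
  have "(\<Sum>a<M. complex_of_real (1 / sqrt M) * w a m) = z 0 m" for m
  proof -
    have "(\<Sum>a<M. complex_of_real (1 / sqrt M) * w a m)
        = (\<Sum>a<M. \<Sum>b<M. complex_of_real (householder M a 0 * householder M a b) * z b m)"
      unfolding w_def using householder_first_column[OF M] by (simp add: sum_distrib_left mult.assoc)
    also have "\<dots> = (\<Sum>b<M. \<Sum>a<M. complex_of_real (householder M a 0 * householder M a b) * z b m)"
      by (rule sum.swap)
    also have "\<dots> = (\<Sum>b<M. complex_of_real (\<Sum>a<M. householder M 0 a * householder M b a) * z b m)"
    proof -
      have "householder M a 0 * householder M a b = householder M 0 a * householder M b a" for a b
        using householder_sym[of M a 0] householder_sym[of M a b] by simp
      thus ?thesis by (simp only: of_real_sum sum_distrib_right)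
    qed
    also have "\<dots> = (\<Sum>b<M. (if 0 = b then z b m else 0))"
      using householder_orthogonal[OF M] M by (intro sum.cong refl) auto
    finally show ?thesis using M by simp
  qed
  thus "(\<lambda>m. \<Sum>a<M. complex_of_real (1 / sqrt M) * w a m) = z 0" by auto
qed

lemma l2_inner_bounded_op_sums:
  fixes M :: nat
  assumes T: "bounded_op T" and zl: "\<forall>b<M. z b \<in> l2"
  shows "l2_inner (T (\<lambda>m. \<Sum>b<M. g b * z b m)) (\<lambda>m. \<Sum>c<M. h c * z c m)
    = (\<Sum>b<M. \<Sum>c<M. g b * cnj (h c) * l2_inner (T (z b)) (z c))"
proof -
  have zl': "\<forall>b\<in>{..<M}. z b \<in> l2" using zl by auto
  have Tzl: "\<forall>b\<in>{..<M}. T (z b) \<in> l2" using zl' bounded_op_l2[OF T] by auto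
  have "T (\<lambda>m. \<Sum>b<M. g b * z b m) = (\<lambda>m. \<Sum>b<M. g b * T (z b) m)"
    by (rule bounded_op_sum[OF T finite_lessThan zl'])
  thus ?thesis
    using l2_inner_sum_left[OF finite_lessThan Tzl l2_sum[OF finite_lessThan zl']]
      l2_inner_sum_right[OF finite_lessThan zl' bspec[OF Tzl]]
    by (simp add: sum_distrib_left mult.assoc)
qed

lemma weighted_double_sum_le:
  fixes g :: "nat \<Rightarrow> real" and E :: "nat \<Rightarrow> nat \<Rightarrow> complex"
  assumes M: "M > 0" and g1: "(\<Sum>b<M. (g b)^2) = 1" and gb: "\<forall>b<M. \<bar>g b\<bar> \<le> 1"
    and diag: "\<forall>b<M. b \<noteq> 0 \<longrightarrow> cmod (E b b) \<le> \<delta>"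
    and off: "\<forall>b<M. \<forall>c<M. b \<noteq> c \<longrightarrow> cmod (E b c) \<le> \<delta>" and \<delta>: "\<delta> \<ge> 0"
  shows "cmod (\<Sum>b<M. \<Sum>c<M. complex_of_real (g b * g c) * E b c) \<le> (g 0)^2 * cmod (E 0 0) + \<delta> + (real M)^2 * \<delta>"
proof -
  define D where "D b = (if b = 0 then (g 0)^2 * cmod (E 0 0) else (g b)^2 * \<delta>)" for b
  have entry: "cmod (complex_of_real (g b * g c) * E b c) \<le> (if b = c then D b else 0) + \<delta>"
    if "b < M" "c < M" for b c
  proof (cases "b = c")
    case True
    have "cmod (complex_of_real (g b * g c) * E b c) = (g b)^2 * cmod (E b b)"
      using True by (simp add: norm_mult power2_eq_square abs_mult)
    also have "\<dots> \<le> D b" using diag that by (cases "b = 0") (auto simp: D_def mult_left_mono)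
    finally show ?thesis using True \<delta> by simp
  next
    case False
    have "cmod (complex_of_real (g b * g c) * E b c) = \<bar>g b\<bar> * \<bar>g c\<bar> * cmod (E b c)"
      by (simp add: norm_mult abs_mult)
    also have "\<dots> \<le> 1 * 1 * \<delta>" using gb off that False by (intro mult_mono) auto
    finally show ?thesis using False by simp
  qed
  have "(\<Sum>b<M. D b) = D 0 + \<delta> * (\<Sum>b\<in>{1..<M}. (g b)^2)"
    using M by (simp add: lessThan_atLeast0 sum.atLeast_Suc_lessThan D_def sum_distrib_left mult.commute)
  also have "\<delta> * (\<Sum>b\<in>{1..<M}. (g b)^2) \<le> \<delta> * (\<Sum>b<M. (g b)^2)"
    using \<delta> by (intro mult_left_mono sum_mono2) auto
  finally have D: "(\<Sum>b<M. D b) \<le> (g 0)^2 * cmod (E 0 0) + \<delta>" using g1 by (simp add: D_def)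
  have "cmod (\<Sum>b<M. \<Sum>c<M. complex_of_real (g b * g c) * E b c)
      \<le> (\<Sum>b<M. \<Sum>c<M. cmod (complex_of_real (g b * g c) * E b c))"
    by (rule order_trans[OF norm_sum sum_mono[OF norm_sum]])
  also have "\<dots> \<le> (\<Sum>b<M. \<Sum>c<M. (if b = c then D b else 0) + \<delta>)"
    using entry by (intro sum_mono) auto
  also have "\<dots> = (\<Sum>b<M. D b) + (real M)^2 * \<delta>"
    by (simp add: sum.distrib power2_eq_square)
  finally show ?thesis using D by simp
qed

lemma mixture_diagonal_error_le:
  fixes g :: "nat \<Rightarrow> real"
  assumes T: "bounded_op T" and M: "M > 0" and zl: "\<forall>b<M. z b \<in> l2"
    and g1: "(\<Sum>b<M. (g b)^2) = 1" and gb: "\<forall>b<M. \<bar>g b\<bar> \<le> 1"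
    and diag: "\<forall>b<M. b \<noteq> 0 \<longrightarrow> cmod (l2_inner (T (z b)) (z b) - \<mu>) \<le> \<delta>"
    and off: "\<forall>b<M. \<forall>c<M. b \<noteq> c \<longrightarrow> cmod (l2_inner (T (z b)) (z c)) \<le> \<delta>" and \<delta>: "\<delta> \<ge> 0"
  shows "cmod (l2_inner (T (\<lambda>m. \<Sum>b<M. complex_of_real (g b) * z b m))
      (\<lambda>m. \<Sum>b<M. complex_of_real (g b) * z b m) - \<mu>)
    \<le> (g 0)^2 * cmod (l2_inner (T (z 0)) (z 0) - \<mu>) + \<delta> + (real M)^2 * \<delta>"
proof -
  define E where "E b c = l2_inner (T (z b)) (z c) - (if b = c then \<mu> else 0)" for b c
  have "(\<Sum>b<M. \<Sum>c<M. complex_of_real (g b * g c) * (if b = c then \<mu> else 0))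
      = complex_of_real (\<Sum>b<M. (g b)^2) * \<mu>"
    by (simp add: if_distrib sum.delta power2_eq_square sum_distrib_right cong: if_cong)
  hence "l2_inner (T (\<lambda>m. \<Sum>b<M. complex_of_real (g b) * z b m)) (\<lambda>m. \<Sum>b<M. complex_of_real (g b) * z b m) - \<mu>
      = (\<Sum>b<M. \<Sum>c<M. complex_of_real (g b * g c) * E b c)"
    using l2_inner_bounded_op_sums[OF T zl] g1
    by (simp add: E_def algebra_simps sum_subtractf)
  moreover have "cmod (\<Sum>b<M. \<Sum>c<M. complex_of_real (g b * g c) * E b c)
      \<le> (g 0)^2 * cmod (E 0 0) + \<delta> + (real M)^2 * \<delta>"
    using diag off by (intro weighted_double_sum_le[OF M g1 gb _ _ \<delta>]) (auto simp: E_def)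
  ultimately show ?thesis by (simp add: E_def)
qed

lemma householder_mixture_diagonal_error_le:
  assumes T: "bounded_op T" and M: "M \<ge> 2" and a: "a < M" and zl: "\<forall>b<M. z b \<in> l2"
    and diag: "\<forall>b<M. b \<noteq> 0 \<longrightarrow> cmod (l2_inner (T (z b)) (z b) - \<mu>) \<le> \<delta>"
    and off: "\<forall>b<M. \<forall>c<M. b \<noteq> c \<longrightarrow> cmod (l2_inner (T (z b)) (z c)) \<le> \<delta>" and \<delta>: "\<delta> \<ge> 0"
  defines "w \<equiv> \<lambda>m. \<Sum>b<M. complex_of_real (householder M a b) * z b m"
  shows "cmod (l2_inner (T w) w - \<mu>) \<le> cmod (l2_inner (T (z 0)) (z 0) - \<mu>) / M + \<delta> + (real M)^2 * \<delta>"
proof -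
  have "(\<Sum>b<M. (householder M a b)^2) = 1"
    using householder_orthogonal[OF M a a] by (simp add: power2_eq_square)
  moreover have "\<forall>b<M. \<bar>householder M a b\<bar> \<le> 1" using householder_abs_le_1[OF M a] by blast
  moreover have "M > 0" using M by simp
  ultimately have "cmod (l2_inner (T w) w - \<mu>)
      \<le> (householder M a 0)^2 * cmod (l2_inner (T (z 0)) (z 0) - \<mu>) + \<delta> + (real M)^2 * \<delta>"
    unfolding w_def using mixture_diagonal_error_le[OF T _ zl _ _ diag off \<delta>] by blast
  moreover have "(householder M a 0)^2 = 1 / M"
    using householder_first_column[OF M] inv_sqrt_facts(3)[OF M] by simp
  ultimately show ?thesis by simp
qed

section \<open>Almost orthogonal families of approximating vectors\<close>

lemma orthonormal_on_extend:
  assumes z: "orthonormal_on {..<n} z" and y: "y \<in> l2" "l2_norm y = 1"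
    and orth: "\<forall>b<n. l2_inner y (z b) = 0"
  shows "orthonormal_on {..<Suc n} (z(n := y))"
proof -
  have zl: "\<forall>b<n. z b \<in> l2" using z by (simp add: orthonormal_on_def)
  have "l2_inner y y = 1" using l2_inner_self[OF y(1)] y(2) by simp
  moreover have "l2_inner (z b) y = 0" if "b < n" for b
    using l2_inner_commute[OF y(1)] zl orth that by (metis complex_cnj_zero)
  ultimately show ?thesis
    using z y orth unfolding orthonormal_on_def by (auto simp: less_Suc_eq)
qed

definition almost_orthogonal_family ::
  "('n \<Rightarrow> (nat \<Rightarrow> complex) \<Rightarrow> (nat \<Rightarrow> complex)) \<Rightarrow> complex ^ 'n \<Rightarrow> real \<Rightarrow> nat \<Rightarrow> nat \<Rightarrow>
    (nat \<Rightarrow> nat \<Rightarrow> complex) \<Rightarrow> nat \<Rightarrow> bool" where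
  "almost_orthogonal_family T lam \<delta> L n z B \<longleftrightarrow>
     orthonormal_on {..<n} z \<and> (\<forall>b<n. supp_below B (z b)) \<and>
     (\<forall>b<n. 0 < b \<longrightarrow> (\<forall>m<L. z b m = 0) \<and> (\<forall>j. cmod (l2_inner (T j (z b)) (z b) - lam $ j) \<le> \<delta>)) \<and>
     (\<forall>b<n. \<forall>c<n. b \<noteq> c \<longrightarrow> (\<forall>j. cmod (l2_inner (T j (z b)) (z c)) \<le> \<delta>))"

lemma almost_orthogonal_family_extend:
  assumes z: "almost_orthogonal_family T lam \<delta> L n z B"
    and y: "supp_below R y" "\<forall>m<max L B. y m = 0" "l2_norm y = 1"
      "\<forall>j. cmod (l2_inner (T j y) y - lam $ j) \<le> \<delta>"
      "\<forall>j. \<forall>w\<in>z ` {..<n}. cmod (l2_inner (T j y) w) \<le> \<delta> \<and> cmod (l2_inner (T j w) y) \<le> \<delta>"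
  shows "almost_orthogonal_family T lam \<delta> L (Suc n) (z(n := y)) (max B R)"
proof -
  note z = z[unfolded almost_orthogonal_family_def]
  have split: "b < n \<or> b = n" if "b < Suc n" for b using that by linarith
  have "\<forall>b<n. l2_inner y (z b) = 0" using l2_inner_disjoint_supp(1)[of B y] y(2) z by auto
  hence "orthonormal_on {..<Suc n} (z(n := y))"
    using orthonormal_on_extend[OF conjunct1[OF z] supp_below_l2[OF y(1)] y(3)] by blast
  moreover have "\<forall>b<Suc n. supp_below (max B R) ((z(n := y)) b)"
    using split z y(1) by (auto simp: supp_below_def)
  moreover have "\<forall>b<Suc n. 0 < b \<longrightarrow> (\<forall>m<L. (z(n := y)) b m = 0) \<and>
      (\<forall>j. cmod (l2_inner (T j ((z(n := y)) b)) ((z(n := y)) b) - lam $ j) \<le> \<delta>)"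
    using split z y(2,4) by fastforce
  moreover have "\<forall>b<Suc n. \<forall>c<Suc n. b \<noteq> c \<longrightarrow>
      (\<forall>j. cmod (l2_inner (T j ((z(n := y)) b)) ((z(n := y)) c)) \<le> \<delta>)"
    using split z y(5) by fastforce
  ultimately show ?thesis unfolding almost_orthogonal_family_def by blast
qed

lemma exists_almost_orthogonal_family:
  fixes T :: "'n::finite \<Rightarrow> (nat \<Rightarrow> complex) \<Rightarrow> (nat \<Rightarrow> complex)"
  assumes T: "\<forall>j. bounded_op (T j)" and x: "orthonormal_seq x"
    and lim: "\<forall>j. (\<lambda>k. l2_inner (T j (x k)) (x k)) \<longlonglongrightarrow> lam $ j"
    and \<delta>: "\<delta> > 0" and z0: "supp_below L z0" "l2_norm z0 = 1"
  shows "\<exists>z B. z 0 = z0 \<and> almost_orthogonal_family T lam \<delta> L (Suc n) z B"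
proof (induction n)
  case 0
  have "l2_inner z0 z0 = 1" using l2_inner_self[OF supp_below_l2[OF z0(1)]] z0(2) by simp
  thus ?case using z0 supp_below_l2 unfolding almost_orthogonal_family_def
    by (intro exI[of _ "\<lambda>_. z0"] exI[of _ L]) (auto simp: orthonormal_on_def)
next
  case (Suc n)
  then obtain z B where z: "z 0 = z0" "almost_orthogonal_family T lam \<delta> L (Suc n) z B" by blast
  have Z: "finite (z ` {..<Suc n})" "z ` {..<Suc n} \<subseteq> l2"
    using z(2) supp_below_l2 by (auto simp: almost_orthogonal_family_def)
  obtain y R where "supp_below R y" "\<forall>m<max L B. y m = 0" "l2_norm y = 1"
    "\<forall>j. cmod (l2_inner (T j y) y - lam $ j) \<le> \<delta>"
    "\<forall>j. \<forall>w\<in>z ` {..<Suc n}. cmod (l2_inner (T j y) w) \<le> \<delta> \<and> cmod (l2_inner (T j w) y) \<le> \<delta>"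
    using exists_approximating_vector[OF T x lim \<delta> Z, of "max L B"] by (elim exE conjE) (rule that)
  from almost_orthogonal_family_extend[OF z(2) this] show ?case
    using z(1) by (metis fun_upd_other nat.distinct(1))
qed

text \<open>Reflect a unit vector \<open>z0\<close> together with \<open>M - 1\<close> almost orthogonal approximating vectors by
  the Householder reflection: every resulting vector carries only the weight \<open>1/M\<close> of \<open>z0\<close>,
  so its diagonal values are close to \<open>lam\<close> once \<open>M\<close> is large, while \<open>z0\<close> stays in their span.\<close>

lemma exists_mixing_parameters:
  assumes "\<epsilon> > 0"
  shows "\<exists>M \<delta>. M \<ge> (2::nat) \<and> \<delta> > 0 \<and> A / M + \<delta> + (real M)^2 * \<delta> \<le> \<epsilon>"
proof -
  define M where "M = nat \<lceil>2 * A / \<epsilon>\<rceil> + 2"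
  define \<delta> where "\<delta> = (\<epsilon> / 2) / (1 + (real M)^2)"
  have M: "M \<ge> 2" "2 * A / \<epsilon> \<le> M" unfolding M_def by linarith+
  hence A: "A / M \<le> \<epsilon> / 2" using assms by (simp add: field_simps)
  have pos: "1 + (real M)^2 > 0" by (simp add: add_pos_nonneg)
  have "\<delta> + (real M)^2 * \<delta> = (1 + (real M)^2) * \<delta>" by (simp add: algebra_simps)
  also have "\<dots> = \<epsilon> / 2"
    unfolding \<delta>_def times_divide_eq_right[of _ "\<epsilon> / 2"]
    by (rule nonzero_mult_div_cancel_left) (use pos in linarith)
  finally have "A / M + \<delta> + (real M)^2 * \<delta> \<le> \<epsilon>" using A by linarith
  moreover have "\<delta> > 0" unfolding \<delta>_def using assms pos by simp
  ultimately show ?thesis using M(1) by blast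
qed

lemma exists_mixing_family:
  fixes T :: "'n::finite \<Rightarrow> (nat \<Rightarrow> complex) \<Rightarrow> (nat \<Rightarrow> complex)"
  assumes T: "\<forall>j. bounded_op (T j)" and x: "orthonormal_seq x"
    and lim: "\<forall>j. (\<lambda>k. l2_inner (T j (x k)) (x k)) \<longlonglongrightarrow> lam $ j"
    and \<epsilon>: "\<epsilon> > 0" and z0: "supp_below L z0" "l2_norm z0 = 1" "\<forall>m<s. z0 m = 0" and sL: "s \<le> L"
  shows "\<exists>M (w :: nat \<Rightarrow> nat \<Rightarrow> complex) B. M \<ge> 2 \<and> orthonormal_on {..<M} w \<and>
     (\<forall>a<M. supp_below B (w a) \<and> (\<forall>m<s. w a m = 0) \<and>
        (\<forall>j. cmod (l2_inner (T j (w a)) (w a) - lam $ j) \<le> \<epsilon>)) \<and>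
     (\<forall>a<M. \<forall>v. supp_below L v \<and> l2_inner v z0 = 0 \<longrightarrow> l2_inner v (w a) = 0) \<and>
     z0 = (\<lambda>m. \<Sum>a<M. complex_of_real (1 / sqrt M) * w a m)"
proof -
  obtain C where C: "C \<ge> 0" "\<forall>j. \<forall>x\<in>l2. l2_norm (T j x) \<le> C * l2_norm x"
    using bounded_ops_bound[OF T] by blast
  define \<Lambda> where "\<Lambda> = (\<Sum>j\<in>UNIV. cmod (lam $ j))"
  have z0_error: "cmod (l2_inner (T j z0) z0 - lam $ j) \<le> C + \<Lambda>" for j
    using bounded_op_inner_le[OF T[rule_format] spec[OF C(2), of j] supp_below_l2[OF z0(1)]
        supp_below_l2[OF z0(1)]] z0(2) norm_triangle_ineq4[of "l2_inner (T j z0) z0" "lam $ j"]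
      member_le_sum[of j UNIV "\<lambda>j. cmod (lam $ j)"] by (simp add: \<Lambda>_def)
  obtain M \<delta> where M: "M \<ge> 2" and \<delta>: "\<delta> > 0" "(C + \<Lambda>) / M + \<delta> + (real M)^2 * \<delta> \<le> \<epsilon>"
    using exists_mixing_parameters[OF \<epsilon>] by blast
  have SM: "Suc (M - 1) = M" using M by simp
  obtain z B where "z 0 = z0" "almost_orthogonal_family T lam \<delta> L M z B"
    using exists_almost_orthogonal_family[OF T x lim \<delta>(1) z0(1,2), of "M - 1"] unfolding SM by blast
  hence z: "z 0 = z0" "orthonormal_on {..<M} z" "\<forall>b<M. supp_below B (z b)"
    "\<forall>b<M. 0 < b \<longrightarrow> (\<forall>m<L. z b m = 0) \<and> (\<forall>j. cmod (l2_inner (T j (z b)) (z b) - lam $ j) \<le> \<delta>)"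
    "\<forall>b<M. \<forall>c<M. b \<noteq> c \<longrightarrow> (\<forall>j. cmod (l2_inner (T j (z b)) (z c)) \<le> \<delta>)"
    unfolding almost_orthogonal_family_def by blast+
  have zl: "\<forall>b<M. z b \<in> l2" using z(2) by (simp add: orthonormal_on_def)
  define w where "w a = (\<lambda>m. \<Sum>b<M. complex_of_real (householder M a b) * z b m)" for a
  have "cmod (l2_inner (T j (w a)) (w a) - lam $ j) \<le> \<epsilon>" if "a < M" for a j
  proof -
    have "cmod (l2_inner (T j (w a)) (w a) - lam $ j)
        \<le> cmod (l2_inner (T j (z 0)) (z 0) - lam $ j) / M + \<delta> + (real M)^2 * \<delta>"
      unfolding w_def using z(4,5) zl \<delta>(1)
      by (intro householder_mixture_diagonal_error_le[OF T[rule_format] M that]) auto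
    moreover have "cmod (l2_inner (T j (z 0)) (z 0) - lam $ j) / M \<le> (C + \<Lambda>) / M"
      using z0_error z(1) by (simp add: divide_right_mono)
    ultimately show ?thesis using \<delta>(2) by linarith
  qed
  moreover have "l2_inner v (w a) = 0" if "supp_below L v" "l2_inner v z0 = 0" for v a
  proof -
    have "l2_inner v (z b) = 0" if "b < M" for b
      using l2_inner_disjoint_supp(2)[of L "z b" v] \<open>supp_below L v\<close> \<open>l2_inner v z0 = 0\<close> z(1,4) that
      by (cases "b = 0") auto
    thus ?thesis
      unfolding w_def using l2_inner_sum_right[of "{..<M}" z v] zl supp_below_l2[OF \<open>supp_below L v\<close>]
      by simp
  qed
  moreover have "w a m = 0" if "m < s" for a m
  proof -
    have "z b m = 0" if "b < M" for b
      using z(1,4) z0(3) sL \<open>m < s\<close> that by (cases "b = 0") auto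
    thus ?thesis by (simp add: w_def)
  qed
  moreover have "supp_below B (w a)" for a
    unfolding w_def using z(3) by (intro supp_below_sum) auto
  moreover have "orthonormal_on {..<M} w"
    using householder_mix(1)[OF M z(2)] by (simp add: w_def[abs_def])
  moreover have "z0 = (\<lambda>m. \<Sum>a<M. complex_of_real (1 / sqrt M) * w a m)"
    using householder_mix(2)[OF M z(2)] z(1) by (simp add: w_def)
  ultimately show ?thesis
    using M by (intro exI[of _ M] exI[of _ w] exI[of _ B]) auto
qed

section \<open>Growing an orthonormal list towards a basis\<close>

definition basis_vec :: "nat \<Rightarrow> nat \<Rightarrow> complex" where
  "basis_vec k = (\<lambda>m. if m = k then 1 else 0)"

lemma supp_below_basis_vec: "supp_below (Suc k) (basis_vec k)"
  by (simp add: supp_below_def basis_vec_def)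

lemma l2_inner_basis_vec_right: "l2_inner x (basis_vec k) = x k"
  unfolding l2_inner_supp_below_right[OF supp_below_basis_vec]
  by (simp add: basis_vec_def if_distrib cong: if_cong)

abbreviation orthonormal_list :: "(nat \<Rightarrow> complex) list \<Rightarrow> bool" where
  "orthonormal_list H \<equiv> orthonormal_on {..<length H} (nth H)"

definition in_list_span :: "(nat \<Rightarrow> complex) \<Rightarrow> (nat \<Rightarrow> complex) list \<Rightarrow> bool" where
  "in_list_span v H \<longleftrightarrow> (\<exists>c. v = (\<lambda>m. \<Sum>i<length H. c i * (H!i) m))"

lemma in_list_span_zero: "in_list_span (\<lambda>m. 0) H"
  unfolding in_list_span_def by (intro exI[of _ "\<lambda>_. 0"]) simp

lemma sum_lessThan_add_split: "(\<Sum>i<a + b. g i) = (\<Sum>i<a. g i) + (\<Sum>i<b. g (a + i))"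
  for a b :: nat by (induction b) (simp_all add: add.assoc)

lemma in_list_span_add_append:
  assumes "in_list_span v H" "in_list_span u W"
  shows "in_list_span (\<lambda>m. v m + u m) (H @ W)"
proof -
  obtain c d where v: "v = (\<lambda>m. \<Sum>i<length H. c i * (H!i) m)" and u: "u = (\<lambda>m. \<Sum>i<length W. d i * (W!i) m)"
    using assms by (auto simp: in_list_span_def)
  define e where "e i = (if i < length H then c i else d (i - length H))" for i
  have "(\<Sum>i<length (H @ W). e i * ((H @ W)!i) m) = v m + u m" for m
    by (simp add: sum_lessThan_add_split v u e_def nth_append)
  thus ?thesis unfolding in_list_span_def by (intro exI[of _ e]) auto
qed

lemma in_list_span_append: "in_list_span v H \<Longrightarrow> in_list_span v (H @ W)"
  using in_list_span_add_append[OF _ in_list_span_zero] by simp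

lemma orthonormal_list_append:
  assumes H: "orthonormal_list H" and W: "orthonormal_list W"
    and orth: "\<forall>i<length H. \<forall>a<length W. l2_inner (H!i) (W!a) = 0"
  shows "orthonormal_list (H @ W)"
proof -
  have Hl: "\<And>i. i < length H \<Longrightarrow> H!i \<in> l2" and Wl: "\<And>a. a < length W \<Longrightarrow> W!a \<in> l2"
    using H W by (auto simp: orthonormal_on_def)
  have "l2_inner (W!a) (H!i) = 0" if "i < length H" "a < length W" for i a
    using l2_inner_commute[OF Hl[OF that(1)] Wl[OF that(2)]] orth that by simp
  thus ?thesis
    using H W orth Hl Wl unfolding orthonormal_on_def
    by (auto simp: nth_append not_less)
qed

lemma supp_below_append:
  assumes "\<forall>i<length H. supp_below B (H!i)" "\<forall>a<length W. supp_below B' (W!a)"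
  shows "\<forall>i<length (H @ W). supp_below (max B B') ((H @ W)!i)"
proof (intro allI impI)
  fix i assume i: "i < length (H @ W)"
  show "supp_below (max B B') ((H @ W)!i)"
  proof (cases "i < length H")
    case True thus ?thesis using assms(1) by (auto simp: nth_append intro: supp_below_mono)
  next
    case False
    hence "i - length H < length W" using i by simp
    thus ?thesis using False assms(2) by (auto simp: nth_append intro: supp_below_mono)
  qed
qed

lemma orthonormal_list_residual:
  assumes H: "orthonormal_list H" and v: "v \<in> l2"
  defines "f \<equiv> \<lambda>m. v m - (\<Sum>i<length H. l2_inner v (H!i) * (H!i) m)"
  shows "f \<in> l2" "\<forall>i<length H. l2_inner f (H!i) = 0"
proof -
  have Hl: "\<forall>i\<in>{..<length H}. H!i \<in> l2" using H by (simp add: orthonormal_on_def)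
  show "f \<in> l2" unfolding f_def using v l2_sum[OF finite_lessThan Hl] by (rule l2_diff)
  show "\<forall>i<length H. l2_inner f (H!i) = 0"
  proof (intro allI impI)
    fix i assume i: "i < length H"
    have "l2_inner (\<lambda>m. \<Sum>i'<length H. l2_inner v (H!i') * (H!i') m) (H!i)
        = (\<Sum>i'<length H. l2_inner v (H!i') * l2_inner (H!i') (H!i))"
      using l2_inner_sum_left[OF finite_lessThan Hl] Hl i by simp
    also have "\<dots> = (\<Sum>i'<length H. if i' = i then l2_inner v (H!i) else 0)"
      using H i by (intro sum.cong refl) (auto simp: orthonormal_on_def)
    finally have "l2_inner (\<lambda>m. \<Sum>i'<length H. l2_inner v (H!i') * (H!i') m) (H!i) = l2_inner v (H!i)"
      using i by simp
    thus "l2_inner f (H!i) = 0"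
      unfolding f_def using l2_inner_diff_left[OF v l2_sum[OF finite_lessThan Hl] bspec[OF Hl]] i by simp
  qed
qed

definition partial_basis :: "nat \<Rightarrow> (nat \<Rightarrow> complex) list \<Rightarrow> nat \<Rightarrow> bool" where
  "partial_basis s H B \<longleftrightarrow> orthonormal_list H \<and> (\<forall>i<length H. supp_below B (H!i)) \<and>
     (\<forall>k<s. in_list_span (basis_vec k) H)"

lemma basis_vec_residual:
  assumes P: "partial_basis s H B"
  defines "f \<equiv> \<lambda>m. basis_vec s m - (\<Sum>i<length H. l2_inner (basis_vec s) (H!i) * (H!i) m)"
  shows "f \<in> l2" "\<forall>i<length H. l2_inner f (H!i) = 0" "supp_below (max B (Suc s)) f" "\<forall>m<s. f m = 0"
proof -
  have H: "orthonormal_list H" and Hl: "\<forall>i\<in>{..<length H}. H!i \<in> l2"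
    using P by (auto simp: partial_basis_def orthonormal_on_def)
  show f: "f \<in> l2" "\<forall>i<length H. l2_inner f (H!i) = 0"
    unfolding f_def using orthonormal_list_residual[OF H supp_below_l2[OF supp_below_basis_vec]] by auto
  show "supp_below (max B (Suc s)) f"
    using P supp_below_basis_vec[of s] by (auto simp: f_def partial_basis_def supp_below_def)
  show "\<forall>m<s. f m = 0"
  proof (intro allI impI)
    fix m assume "m < s"
    then obtain c where c: "basis_vec m = (\<lambda>k. \<Sum>i<length H. c i * (H!i) k)"
      using P by (auto simp: partial_basis_def in_list_span_def)
    have "f m = l2_inner f (basis_vec m)" by (simp add: l2_inner_basis_vec_right)
    also have "\<dots> = (\<Sum>i<length H. cnj (c i) * l2_inner f (H!i))"
      by (subst c) (rule l2_inner_sum_right[OF finite_lessThan Hl f(1)])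
    finally show "f m = 0" using f(2) by simp
  qed
qed

text \<open>The component of the next standard basis vector orthogonal to \<open>H\<close> is a multiple of a unit
  vector \<open>z0\<close> with the properties required for mixing; when that component vanishes, any unit
  vector supported beyond \<open>H\<close> serves as \<open>z0\<close>.\<close>

lemma exists_residual_direction:
  fixes T :: "'n::finite \<Rightarrow> (nat \<Rightarrow> complex) \<Rightarrow> (nat \<Rightarrow> complex)"
  assumes T: "\<forall>j. bounded_op (T j)" and x: "orthonormal_seq x"
    and lim: "\<forall>j. (\<lambda>k. l2_inner (T j (x k)) (x k)) \<longlonglongrightarrow> lam $ j"
    and P: "partial_basis s H B"
  shows "\<exists>z0 c L. max B (Suc s) \<le> L \<and> supp_below L z0 \<and> l2_norm z0 = 1 \<and> (\<forall>m<s. z0 m = 0) \<and>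
     (\<forall>i<length H. l2_inner (H!i) z0 = 0) \<and>
     basis_vec s = (\<lambda>m. (\<Sum>i<length H. l2_inner (basis_vec s) (H!i) * (H!i) m) + c * z0 m)"
proof -
  define P where "P = (\<lambda>m. \<Sum>i<length H. l2_inner (basis_vec s) (H!i) * (H!i) m)"
  define f where "f = (\<lambda>m. basis_vec s m - P m)"
  have f: "f \<in> l2" "\<forall>i<length H. l2_inner f (H!i) = 0" "supp_below (max B (Suc s)) f" "\<forall>m<s. f m = 0"
    using basis_vec_residual[OF P] unfolding f_def P_def by auto
  have Hl: "H!i \<in> l2" if "i < length H" for i
    using P that by (auto simp: partial_basis_def orthonormal_on_def)
  show ?thesis
  proof (cases "\<forall>m. f m = 0")
    case True
    obtain y R where y: "supp_below R y" "\<forall>m<max B (Suc s). y m = 0" "l2_norm y = 1"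
      using exists_approximating_vector[OF T x lim zero_less_one, of "{}" "max B (Suc s)"] by auto
    have "l2_inner (H!i) y = 0" if "i < length H" for i
      using l2_inner_disjoint_supp(2)[of B y "H!i"] P that y(2) by (auto simp: partial_basis_def)
    moreover have "basis_vec s = (\<lambda>m. P m + 0 * y m)" using True by (auto simp: f_def)
    ultimately show ?thesis
      using y by (intro exI[of _ y] exI[of _ 0] exI[of _ "max (max B (Suc s)) R"])
        (auto simp: P_def intro: supp_below_mono)
  next
    case False
    hence "l2_norm f \<noteq> 0" using l2_norm_eq_0[OF f(1)] by blast
    hence pos: "l2_norm f > 0" using l2_norm_nonneg[OF f(1)] by simp
    define z0 where "z0 = (\<lambda>m. complex_of_real (1 / l2_norm f) * f m)"
    have "l2_inner (H!i) z0 = 0" if "i < length H" for i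
    proof -
      have "l2_inner (H!i) f = 0" using l2_inner_commute[OF f(1) Hl[OF that]] f(2) that by simp
      thus ?thesis unfolding z0_def by (simp only: l2_inner_scale_right[OF f(1) Hl[OF that]] mult_zero_right)
    qed
    moreover have "l2_norm z0 = 1"
      using l2_norm_scale[OF f(1), of "complex_of_real (1 / l2_norm f)"] pos by (simp add: z0_def norm_divide)
    moreover have "basis_vec s = (\<lambda>m. P m + complex_of_real (l2_norm f) * z0 m)"
      using pos by (auto simp: z0_def f_def)
    ultimately show ?thesis
      using f(3,4) by (intro exI[of _ z0] exI[of _ "complex_of_real (l2_norm f)"] exI[of _ "max B (Suc s)"])
        (auto simp: P_def z0_def supp_below_def)
  qed
qed

lemma partial_basis_extend:
  fixes T :: "'n::finite \<Rightarrow> (nat \<Rightarrow> complex) \<Rightarrow> (nat \<Rightarrow> complex)"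
  assumes T: "\<forall>j. bounded_op (T j)" and x: "orthonormal_seq x"
    and lim: "\<forall>j. (\<lambda>k. l2_inner (T j (x k)) (x k)) \<longlonglongrightarrow> lam $ j"
    and P: "partial_basis s H B"
  shows "\<exists>W B'. W \<noteq> [] \<and> partial_basis (Suc s) (H @ W) B' \<and>
     (\<forall>w\<in>set W. (\<forall>m<s. w m = 0) \<and> (\<forall>j. cmod (l2_inner (T j w) w - lam $ j) \<le> 1 / Suc s))"
proof -
  obtain z0 c L where z0: "max B (Suc s) \<le> L" "supp_below L z0" "l2_norm z0 = 1" "\<forall>m<s. z0 m = 0"
    "\<forall>i<length H. l2_inner (H!i) z0 = 0"
    "basis_vec s = (\<lambda>m. (\<Sum>i<length H. l2_inner (basis_vec s) (H!i) * (H!i) m) + c * z0 m)"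
    using exists_residual_direction[OF T x lim P] by (elim exE conjE) (rule that)
  obtain M :: nat and w :: "nat \<Rightarrow> nat \<Rightarrow> complex" and B' where w: "M \<ge> 2" "orthonormal_on {..<M} w"
    "\<forall>a<M. supp_below B' (w a) \<and> (\<forall>m<s. w a m = 0) \<and>
        (\<forall>j. cmod (l2_inner (T j (w a)) (w a) - lam $ j) \<le> 1 / Suc s)"
    "\<forall>a<M. \<forall>v. supp_below L v \<and> l2_inner v z0 = 0 \<longrightarrow> l2_inner v (w a) = 0"
    "z0 = (\<lambda>m. \<Sum>a<M. complex_of_real (1 / sqrt M) * w a m)"
  proof -
    have eps: "0 < 1 / real (Suc s)" by simp
    have sL: "s \<le> L" using z0(1) by simp
    show thesis
      using exists_mixing_family[OF T x lim eps z0(2,3,4) sL] by (elim exE conjE) (rule that)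
  qed
  define W where "W = map w [0..<M]"
  have "orthonormal_list W" using w(2) by (simp add: W_def orthonormal_on_def)
  moreover have "l2_inner (H!i) (W!a) = 0" if "i < length H" "a < length W" for i a
  proof -
    have "supp_below L (H!i)" using P z0(1) that by (auto simp: partial_basis_def intro: supp_below_mono)
    thus ?thesis using w(4) z0(5) that by (simp add: W_def)
  qed
  ultimately have HW: "orthonormal_list (H @ W)"
    using P by (intro orthonormal_list_append) (auto simp: partial_basis_def)
  have "in_list_span (\<lambda>m. \<Sum>i<length H. l2_inner (basis_vec s) (H!i) * (H!i) m) H"
    unfolding in_list_span_def by (rule exI[of _ "\<lambda>i. l2_inner (basis_vec s) (H!i)"]) (rule refl)
  moreover have "in_list_span (\<lambda>m. c * z0 m) W"
    unfolding in_list_span_def W_def using w(5)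
    by (intro exI[of _ "\<lambda>a. c * complex_of_real (1 / sqrt M)"]) (auto simp: sum_distrib_left mult_ac)
  ultimately have "in_list_span (basis_vec s) (H @ W)"
    by (subst z0(6)) (rule in_list_span_add_append)
  hence "\<forall>k<Suc s. in_list_span (basis_vec k) (H @ W)"
    using P in_list_span_append by (auto simp: partial_basis_def less_Suc_eq)
  moreover have "\<forall>i<length (H @ W). supp_below (max B B') ((H @ W)!i)"
    using P w(3) by (intro supp_below_append) (auto simp: partial_basis_def W_def)
  ultimately show ?thesis
    using HW w(1,3) unfolding partial_basis_def
    by (intro exI[of _ W] exI[of _ "max B B'"]) (auto simp: W_def)
qed

section \<open>Compact diagonal operators\<close>

lemma bounded_seq_pointwise_convergent_subseq:
  fixes f :: "nat \<Rightarrow> nat \<Rightarrow> complex"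
  assumes "\<forall>i k. cmod (f i k) \<le> B"
  shows "\<exists>r \<alpha>. strict_mono r \<and> (\<forall>k. (\<lambda>i. f (r i) k) \<longlonglongrightarrow> \<alpha> k)"
proof -
  define S where "S = PiE UNIV (\<lambda>_::nat. cball (0::complex) B)"
  have "compactin (product_topology (\<lambda>i. euclidean) UNIV) S"
    unfolding S_def compactin_PiE by simp
  hence "compact S" unfolding euclidean_product_topology by simp
  moreover have "\<forall>n. f n \<in> S" using assms by (auto simp: S_def)
  ultimately obtain l r where r: "strict_mono r" "(f \<circ> r) \<longlonglongrightarrow> l"
    using compact_imp_seq_compact unfolding seq_compact_def by metis
  have "isCont (\<lambda>x::nat \<Rightarrow> complex. x k) l" for k
    using continuous_on_product_coordinates[of k] continuous_on_eq_continuous_at[OF open_UNIV] by blast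
  hence "(\<lambda>i. f (r i) k) \<longlonglongrightarrow> l k" for k
    using isCont_tendsto_compose[OF _ r(2), of "\<lambda>x. x k"] by (simp add: o_def)
  thus ?thesis using r(1) by blast
qed

text \<open>\<open>diag_series u N c a\<close> is the series \<open>\<Sum>k c k a k u k\<close>, evaluated coordinatewise; when
  \<open>u k m = 0\<close> for \<open>k \<ge> N m\<close>, its \<open>m\<close>-th coordinate is the finite sum below.\<close>

definition diag_series ::
  "(nat \<Rightarrow> nat \<Rightarrow> complex) \<Rightarrow> (nat \<Rightarrow> nat) \<Rightarrow> (nat \<Rightarrow> complex) \<Rightarrow> (nat \<Rightarrow> complex) \<Rightarrow> (nat \<Rightarrow> complex)"
  where "diag_series u N c a = (\<lambda>m. \<Sum>k<N m. c k * a k * u k m)"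

lemma diag_series_lincomb:
  "diag_series u N c (\<lambda>k. p * a k + q * b k) = (\<lambda>m. p * diag_series u N c a m + q * diag_series u N c b m)"
  unfolding diag_series_def by (simp add: sum_distrib_left sum.distrib algebra_simps)

lemma diag_series_diff:
  "(\<lambda>m. diag_series u N c a m - diag_series u N c b m) = diag_series u N c (\<lambda>k. a k - b k)"
  unfolding diag_series_def by (simp add: sum_subtractf[symmetric] algebra_simps)

lemma diag_series_split:
  "diag_series u N c a = (\<lambda>m. diag_series u N c (\<lambda>k. if k < n then a k else 0) m
     + diag_series u N (\<lambda>k. if k < n then 0 else c k) a m)"
  unfolding diag_series_def by (auto simp: sum.distrib[symmetric] intro!: sum.cong)

lemma l2_norm_diag_series_le:
  assumes U: "orthonormal_seq u" and NU: "\<forall>m k. N m \<le> k \<longrightarrow> u k m = 0"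
    and c: "\<forall>k. cmod (c k) \<le> D" and a: "\<forall>n. (\<Sum>k<n. (cmod (a k))^2) \<le> A^2"
    and D: "0 \<le> D" and A: "0 \<le> A"
  shows "diag_series u N c a \<in> l2" "l2_norm (diag_series u N c a) \<le> D * A"
proof -
  have ul: "\<And>k. u k \<in> l2" using U by (simp add: orthonormal_seq_def)
  have part: "(\<Sum>m<L. (cmod (diag_series u N c a m))^2) \<le> (D * A)^2" for L
  proof -
    define n where "n = (\<Sum>m<L. N m)"
    define S where "S = (\<lambda>m. \<Sum>k<n. (c k * a k) * u k m)"
    have "diag_series u N c a m = S m" if "m < L" for m
    proof -
      have "N m \<le> n" unfolding n_def using that by (intro member_le_sum) auto
      thus ?thesis unfolding diag_series_def S_def using NU by (intro sum.mono_neutral_left) auto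
    qed
    hence "(\<Sum>m<L. (cmod (diag_series u N c a m))^2) = (\<Sum>m<L. (cmod (S m))^2)" by simp
    also have "\<dots> \<le> (\<Sum>m. (cmod (S m))^2)"
      using l2_sum[of "{..<n}" u] ul by (intro sum_le_suminf) (auto simp: S_def mem_l2_iff)
    also have "\<dots> = (\<Sum>k<n. (cmod (c k * a k))^2)"
      using l2_norm_power2[OF l2_sum[of "{..<n}" u]] ul
        l2_norm_orthonormal_sum[OF finite_lessThan orthonormal_seq_on[OF U]]
      by (simp add: S_def)
    also have "\<dots> \<le> (\<Sum>k<n. D^2 * (cmod (a k))^2)"
      using c D by (intro sum_mono) (simp add: norm_mult power_mult_distrib mult_right_mono power_mono)
    also have "\<dots> \<le> D^2 * A^2" using a by (simp add: sum_distrib_left[symmetric] mult_left_mono)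
    finally show ?thesis by (simp add: power_mult_distrib)
  qed
  have summ: "summable (\<lambda>m. (cmod (diag_series u N c a m))^2)"
    by (rule summableI_nonneg_bounded[OF _ part]) simp
  thus l: "diag_series u N c a \<in> l2" by (simp add: mem_l2_iff)
  have "(l2_norm (diag_series u N c a))^2 \<le> (D * A)^2"
    unfolding l2_norm_power2[OF l] by (rule suminf_le_const[OF summ part])
  thus "l2_norm (diag_series u N c a) \<le> D * A" by (rule power2_le_imp_le) (use D A in simp)
qed

text \<open>With \<open>c \<longlonglongrightarrow> 0\<close>, the head \<open>k < n\<close> of the coefficients is killed by their pointwise convergence
  and the tail by the smallness of \<open>c k\<close>.\<close>

lemma diag_series_tendsto_0:
  assumes U: "orthonormal_seq u" and NU: "\<forall>m k. N m \<le> k \<longrightarrow> u k m = 0" and c: "c \<longlonglongrightarrow> 0"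
    and b: "\<forall>i n. (\<Sum>k<n. (cmod (b i k))^2) \<le> A^2" and A: "0 \<le> A"
    and pointwise: "\<forall>k. (\<lambda>i. b i k) \<longlonglongrightarrow> 0"
  shows "(\<lambda>i. l2_norm (diag_series u N c (b i))) \<longlonglongrightarrow> 0"
proof (rule LIMSEQ_I)
  fix e :: real assume e: "e > 0"
  obtain D where D: "D > 0" "\<forall>k. cmod (c k) \<le> D"
    using convergent_imp_Bseq[of c] c by (auto simp: convergent_def elim!: BseqE)
  define \<eta> where "\<eta> = e / (2 * (A + 1))"
  have \<eta>: "\<eta> > 0" "\<eta> * A < e / 2" unfolding \<eta>_def using e A by (simp_all add: field_simps)
  obtain n where n: "\<forall>k\<ge>n. cmod (c k) < \<eta>" using c \<eta>(1) unfolding LIMSEQ_iff by auto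
  define t where "t = e / (2 * D)"
  have t: "t > 0" "D * t = e / 2" unfolding t_def using e D by simp_all
  have "(\<lambda>i. \<Sum>k<n. (cmod (b i k))^2) \<longlonglongrightarrow> (\<Sum>k<n. (cmod (0::complex))^2)"
    using pointwise by (intro tendsto_sum tendsto_power tendsto_norm) auto
  hence "\<forall>\<^sub>F i in sequentially. (\<Sum>k<n. (cmod (b i k))^2) < t^2"
    by (rule order_tendstoD(2)) (use t(1) in simp)
  then obtain i0 where i0: "\<forall>i\<ge>i0. (\<Sum>k<n. (cmod (b i k))^2) < t^2"
    unfolding eventually_sequentially by blast
  show "\<exists>i0. \<forall>i\<ge>i0. norm (l2_norm (diag_series u N c (b i)) - 0) < e"
  proof (intro exI allI impI)
    fix i assume "i \<ge> i0"
    define head where "head = (\<lambda>k. if k < n then b i k else 0)"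
    have "(\<Sum>k<n'. (cmod (head k))^2) \<le> (\<Sum>k<n. (cmod (b i k))^2)" for n'
      unfolding head_def by (subst sum.mono_neutral_cong_right[of "{..<n'}" "{..<n'} \<inter> {..<n}"])
        (auto intro!: sum_mono2)
    hence "\<forall>n'. (\<Sum>k<n'. (cmod (head k))^2) \<le> t^2" using i0 \<open>i \<ge> i0\<close> by (meson less_imp_le order_trans)
    note H = l2_norm_diag_series_le[OF U NU D(2) this less_imp_le[OF D(1)] less_imp_le[OF t(1)]]
    have "\<forall>k. cmod (if k < n then 0 else c k) \<le> \<eta>" using n \<eta>(1) by (auto simp: less_imp_le)
    note T = l2_norm_diag_series_le[OF U NU this spec[OF b, of i] less_imp_le[OF \<eta>(1)] A]
    have "l2_norm (diag_series u N c (b i)) \<le> D * t + \<eta> * A"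
      using l2_norm_triangle[OF H(1) T(1)] H(2) T(2) diag_series_split[of u N c "b i" n]
      by (simp add: head_def)
    moreover have "0 \<le> l2_norm (diag_series u N c (b i))"
      using l2_norm_diag_series_le(1)[OF U NU D(2) spec[OF b, of i] less_imp_le[OF D(1)] A]
      by (rule l2_norm_nonneg)
    ultimately show "norm (l2_norm (diag_series u N c (b i)) - 0) < e" using t(2) \<eta>(2) by simp
  qed
qed

lemma bounded_op_diagonal:
  assumes U: "orthonormal_seq u" and NU: "\<forall>m k. N m \<le> k \<longrightarrow> u k m = 0"
    and c: "\<forall>k. cmod (c k) \<le> D" and D: "0 \<le> D"
  shows "bounded_op (\<lambda>x. diag_series u N c (\<lambda>k. l2_inner x (u k)))"
proof -
  have ul: "\<And>k. u k \<in> l2" using U by (simp add: orthonormal_seq_def)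
  have "diag_series u N c (\<lambda>k. l2_inner x (u k)) \<in> l2 \<and>
      l2_norm (diag_series u N c (\<lambda>k. l2_inner x (u k))) \<le> D * l2_norm x" if "x \<in> l2" for x
  proof -
    have "\<forall>n. (\<Sum>k<n. (cmod (l2_inner x (u k)))^2) \<le> (l2_norm x)^2"
      using bessel_inequality[OF that _ orthonormal_seq_on[OF U]] by simp
    from l2_norm_diag_series_le[OF U NU c this D l2_norm_nonneg[OF that]] show ?thesis by simp
  qed
  moreover have "(\<lambda>k. l2_inner (\<lambda>m. a * x m + b * y m) (u k)) = (\<lambda>k. a * l2_inner x (u k) + b * l2_inner y (u k))"
    if "x \<in> l2" "y \<in> l2" for x y a b
    using l2_inner_lincomb_left[OF that ul] by simp
  ultimately show ?thesis
    unfolding bounded_op_def by (auto simp: diag_series_lincomb)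
qed

lemma compact_op_diagonal:
  assumes U: "orthonormal_seq u" and NU: "\<forall>m k. N m \<le> k \<longrightarrow> u k m = 0" and c: "c \<longlonglongrightarrow> 0"
  shows "compact_op (\<lambda>x. diag_series u N c (\<lambda>k. l2_inner x (u k)))"
  unfolding compact_op_def
proof (intro conjI allI impI)
  have ul: "\<And>k. u k \<in> l2" using U by (simp add: orthonormal_seq_def)
  obtain D where D: "D > 0" "\<forall>k. cmod (c k) \<le> D"
    using convergent_imp_Bseq[of c] c by (auto simp: convergent_def elim!: BseqE)
  show "bounded_op (\<lambda>x. diag_series u N c (\<lambda>k. l2_inner x (u k)))"
    using bounded_op_diagonal[OF U NU D(2)] D(1) by simp
  fix xs :: "nat \<Rightarrow> nat \<Rightarrow> complex"
  assume "(\<forall>i. xs i \<in> l2) \<and> (\<exists>B. \<forall>i. l2_norm (xs i) \<le> B)"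
  then obtain B where xs: "\<And>i. xs i \<in> l2" and B: "\<And>i. l2_norm (xs i) \<le> B" by blast
  have B0: "0 \<le> B" using B[of 0] l2_norm_nonneg[OF xs] by (meson order_trans)
  define a where "a i k = l2_inner (xs i) (u k)" for i k
  have a: "(\<Sum>k<n. (cmod (a i k))^2) \<le> B^2" for i n
    using order_trans[OF bessel_inequality[OF xs[of i] finite_lessThan[of n] orthonormal_seq_on[OF U]]
        power_mono[OF B[of i] l2_norm_nonneg[OF xs[of i]], of 2]] by (simp add: a_def)
  have "cmod (a i k) \<le> B" for i k
    using l2_cauchy_schwarz[OF xs[of i] ul[of k]] B[of i] by (simp add: a_def l2_norm_orthonormal[OF U])
  then obtain r \<alpha> where r: "strict_mono r" "\<forall>k. (\<lambda>i. a (r i) k) \<longlonglongrightarrow> \<alpha> k"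
    using bounded_seq_pointwise_convergent_subseq[of a B] by blast
  have \<alpha>: "(\<Sum>k<n. (cmod (\<alpha> k))^2) \<le> B^2" for n
    using r(2) a by (intro LIMSEQ_le_const2[of "\<lambda>i. \<Sum>k<n. (cmod (a (r i) k))^2"]
        tendsto_sum tendsto_power tendsto_norm) auto
  define b where "b i k = a (r i) k - \<alpha> k" for i k
  have "(\<Sum>k<n. (cmod (b i k))^2) \<le> (2 * B)^2" for i n
  proof -
    have "(\<Sum>k<n. (cmod (b i k))^2) \<le> (\<Sum>k<n. 2 * (cmod (a (r i) k))^2 + 2 * (cmod (\<alpha> k))^2)"
      unfolding b_def using cmod_add_power2_le[of "a (r i) k" "- \<alpha> k" for k] by (intro sum_mono) simp
    also have "\<dots> \<le> 2 * B^2 + 2 * B^2"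
      using a[of "r i" n] \<alpha>[of n] by (simp add: sum.distrib sum_distrib_left[symmetric])
    finally show ?thesis by (simp add: power2_eq_square)
  qed
  moreover have "\<forall>k. (\<lambda>i. b i k) \<longlonglongrightarrow> 0"
    using r(2) by (simp add: b_def LIM_zero)
  ultimately have "(\<lambda>i. l2_norm (diag_series u N c (b i))) \<longlonglongrightarrow> 0"
    using B0 by (intro diag_series_tendsto_0[OF U NU c, where A = "2 * B"]) auto
  moreover have "diag_series u N c \<alpha> \<in> l2"
    using l2_norm_diag_series_le(1)[OF U NU D(2) allI[OF \<alpha>] less_imp_le[OF D(1)] B0] .
  ultimately show "\<exists>r z. strict_mono r \<and> z \<in> l2 \<and>
      (\<lambda>i. l2_norm (\<lambda>k. diag_series u N c (\<lambda>k. l2_inner (xs (r i)) (u k)) k - z k)) \<longlonglongrightarrow> 0"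
    using r(1) diag_series_diff[of u N c] by (intro exI[of _ r] exI[of _ "diag_series u N c \<alpha>"])
      (simp add: a_def b_def[abs_def])
qed

section \<open>The orthonormal basis and the compact perturbation\<close>

lemma append_chain_prefix:
  assumes "\<And>s. H (Suc s) = H s @ W s" and "s \<le> s'"
  shows "\<exists>ys. H s' = H s @ ys"
  using assms(2)
proof (induction s' rule: dec_induct)
  case (step n)
  then obtain ys where "H n = H s @ ys" by blast
  thus ?case using assms(1)[of n] by auto
qed simp

lemma append_chain_nth:
  assumes "\<And>s. H (Suc s) = H s @ W s" "s \<le> s'" "i < length (H s)"
  shows "H s' ! i = H s ! i"
  using append_chain_prefix[where H = H and W = W, OF assms(1,2)] assms(3) by (auto simp: nth_append)

lemma append_chain_length_ge:
  assumes "\<And>s. H (Suc s) = H s @ W s" "\<And>s. W s \<noteq> []"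
  shows "s \<le> length (H s)"
proof (induction s)
  case (Suc s)
  have "length (W s) > 0" using assms(2)[of s] by simp
  moreover have "length (H (Suc s)) = length (H s) + length (W s)" using assms(1)[of s] by simp
  ultimately show ?case using Suc.IH by linarith
qed simp

lemma append_chain_nth_prop:
  assumes chain: "\<And>s. H (Suc s) = H s @ W s" and R: "\<And>s w. w \<in> set (W s) \<Longrightarrow> R s w"
    and mono: "\<And>S s w. S \<le> s \<Longrightarrow> R s w \<Longrightarrow> R S w"
    and i: "i < length (H s)" "length (H S) \<le> i"
  shows "R S (H s ! i)"
  using i
proof (induction s)
  case 0
  thus ?case using append_chain_prefix[where H = H and W = W, OF chain, of 0 S] by auto
next
  case (Suc s)
  show ?case
  proof (cases "i < length (H s)")
    case True
    thus ?thesis using Suc append_chain_nth[where H = H and W = W, OF chain, of s "Suc s" i] by simp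
  next
    case False
    have "S \<le> s"
    proof (rule ccontr)
      assume "\<not> S \<le> s"
      hence "\<exists>ys. H S = H (Suc s) @ ys" by (intro append_chain_prefix[where H = H and W = W, OF chain]) simp
      thus False using Suc.prems by auto
    qed
    moreover have "H (Suc s) ! i \<in> set (W s)" using False Suc.prems(1) by (simp add: chain nth_append)
    ultimately show ?thesis by (rule mono[OF _ R])
  qed
qed

lemma exists_partial_basis_chain:
  fixes T :: "'n::finite \<Rightarrow> (nat \<Rightarrow> complex) \<Rightarrow> (nat \<Rightarrow> complex)"
  assumes T: "\<forall>j. bounded_op (T j)" and x: "orthonormal_seq x"
    and lim: "\<forall>j. (\<lambda>k. l2_inner (T j (x k)) (x k)) \<longlonglongrightarrow> lam $ j"
  shows "\<exists>H W. \<forall>s. (\<exists>B. partial_basis s (H s) B) \<and> W s \<noteq> [] \<and> H (Suc s) = H s @ W s \<and>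
     (\<forall>w\<in>set (W s). (\<forall>m<s. w m = 0) \<and> (\<forall>j. cmod (l2_inner (T j w) w - lam $ j) \<le> 1 / Suc s))"
proof -
  define Q where "Q s HB HB' \<longleftrightarrow> (\<exists>W. W \<noteq> [] \<and> fst HB' = fst HB @ W \<and>
    (\<forall>w\<in>set W. (\<forall>m<s. w m = 0) \<and> (\<forall>j. cmod (l2_inner (T j w) w - lam $ j) \<le> 1 / Suc s)))"
    for s and HB HB' :: "(nat \<Rightarrow> complex) list \<times> nat"
  have "\<exists>HB. partial_basis 0 (fst HB) (snd HB)"
    by (intro exI[of _ "([], 0)"]) (simp add: partial_basis_def orthonormal_on_def)
  moreover have "\<exists>HB'. partial_basis (Suc s) (fst HB') (snd HB') \<and> Q s HB HB'"
    if P: "partial_basis s (fst HB) (snd HB)" for s HB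
  proof -
    obtain W B' where "W \<noteq> []" "partial_basis (Suc s) (fst HB @ W) B'"
      "\<forall>w\<in>set W. (\<forall>m<s. w m = 0) \<and> (\<forall>j. cmod (l2_inner (T j w) w - lam $ j) \<le> 1 / Suc s)"
      using partial_basis_extend[OF T x lim P] by (elim exE conjE) (rule that)
    thus ?thesis unfolding Q_def by (intro exI[of _ "(fst HB @ W, B')"]) auto
  qed
  ultimately obtain HB where HB: "\<And>s. partial_basis s (fst (HB s)) (snd (HB s))" "\<And>s. Q s (HB s) (HB (Suc s))"
    using dependent_nat_choice[of "\<lambda>s HB. partial_basis s (fst HB) (snd HB)" Q] by blast
  have "\<exists>W. \<forall>s. W s \<noteq> [] \<and> fst (HB (Suc s)) = fst (HB s) @ W s \<and>
    (\<forall>w\<in>set (W s). (\<forall>m<s. w m = 0) \<and> (\<forall>j. cmod (l2_inner (T j w) w - lam $ j) \<le> 1 / Suc s))"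
    using HB(2) unfolding Q_def by (intro choice) blast
  then obtain W where "\<forall>s. W s \<noteq> [] \<and> fst (HB (Suc s)) = fst (HB s) @ W s \<and>
    (\<forall>w\<in>set (W s). (\<forall>m<s. w m = 0) \<and> (\<forall>j. cmod (l2_inner (T j w) w - lam $ j) \<le> 1 / Suc s))"
    by blast
  hence "\<forall>s. (\<exists>B. partial_basis s (fst (HB s)) B) \<and> W s \<noteq> [] \<and> fst (HB (Suc s)) = fst (HB s) @ W s \<and>
    (\<forall>w\<in>set (W s). (\<forall>m<s. w m = 0) \<and> (\<forall>j. cmod (l2_inner (T j w) w - lam $ j) \<le> 1 / Suc s))"
    using HB(1) by blast
  thus ?thesis by (intro exI[of _ "\<lambda>s. fst (HB s)"] exI[of _ W])
qed

lemma orthonormal_basis_partial_basis_chain: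
  assumes chain: "\<And>s. H (Suc s) = H s @ W s" "\<And>s. W s \<noteq> []"
    and P: "\<And>s. \<exists>B. partial_basis s (H s) B"
  shows "orthonormal_basis (\<lambda>k. H (Suc k) ! k)"
proof -
  define u where "u k = H (Suc k) ! k" for k
  have len: "s \<le> length (H s)" for s by (rule append_chain_length_ge[where H = H and W = W, OF chain])
  have u: "u k = H s ! k" if "k < length (H s)" for k s
    using append_chain_nth[where H = H and W = W, OF chain(1), of "Suc k" s k]
      append_chain_nth[where H = H and W = W, OF chain(1), of s "Suc k" k] len[of "Suc k"] that
    by (cases "Suc k \<le> s") (auto simp: u_def)
  have orth: "orthonormal_list (H s)" and span: "\<forall>k<s. in_list_span (basis_vec k) (H s)" for s
    using P[of s] by (auto simp: partial_basis_def)
  have U: "orthonormal_seq u" unfolding orthonormal_seq_def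
  proof (intro conjI allI)
    fix k show "u k \<in> l2" using orth[of "Suc k"] len[of "Suc k"] by (simp add: orthonormal_on_def u_def)
  next
    fix k k'
    have "k < length (H (Suc (max k k')))" "k' < length (H (Suc (max k k')))"
      using len[of "Suc (max k k')"] by auto
    thus "l2_inner (u k) (u k') = (if k = k' then 1 else 0)"
      using orth[of "Suc (max k k')"] u by (simp add: orthonormal_on_def)
  qed
  have "y = (\<lambda>_. 0)" if y: "y \<in> l2" "\<forall>k. l2_inner y (u k) = 0" for y
  proof
    fix m
    obtain c where c: "basis_vec m = (\<lambda>k. \<Sum>i<length (H (Suc m)). c i * u i k)"
      using span[of "Suc m"] u by (auto simp: in_list_span_def)
    have "y m = l2_inner y (basis_vec m)" by (simp add: l2_inner_basis_vec_right)
    also have "\<dots> = (\<Sum>i<length (H (Suc m)). cnj (c i) * l2_inner y (u i))"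
      unfolding c using U y(1) by (intro l2_inner_sum_right) (auto simp: orthonormal_seq_def)
    finally show "y m = 0" using y(2) by simp
  qed
  thus ?thesis using U unfolding orthonormal_basis_def u_def by blast
qed

lemma exists_basis_with_diagonal_limit:
  fixes T :: "'n::finite \<Rightarrow> (nat \<Rightarrow> complex) \<Rightarrow> (nat \<Rightarrow> complex)"
  assumes T: "\<forall>j. bounded_op (T j)" and x: "orthonormal_seq x"
    and lim: "\<forall>j. (\<lambda>k. l2_inner (T j (x k)) (x k)) \<longlonglongrightarrow> lam $ j"
  shows "\<exists>u N. orthonormal_basis u \<and> (\<forall>m k. N m \<le> k \<longrightarrow> u k m = 0) \<and>
     (\<forall>j. (\<lambda>k. l2_inner (T j (u k)) (u k)) \<longlonglongrightarrow> lam $ j)"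
proof -
  define R where "R S w \<longleftrightarrow> (\<forall>m<S. w m = 0) \<and> (\<forall>j. cmod (l2_inner (T j w) w - lam $ j) \<le> 1 / Suc S)"
    for S and w :: "nat \<Rightarrow> complex"
  obtain H W where H: "\<And>s. \<exists>B. partial_basis s (H s) B" "\<And>s. W s \<noteq> []" "\<And>s. H (Suc s) = H s @ W s"
    and W: "\<And>s w. w \<in> set (W s) \<Longrightarrow> R s w"
    using exists_partial_basis_chain[OF T x lim] unfolding R_def by metis
  define u where "u k = H (Suc k) ! k" for k
  have mono: "R S w" if "S \<le> s" "R s w" for S s w
    using that frac_le[of 1 1 "real (Suc S)" "real (Suc s)"] unfolding R_def by (auto intro: order_trans)
  have late: "R S (u k)" if "length (H S) \<le> k" for S k
    unfolding u_def using append_chain_length_ge[where H = H and W = W, OF H(3,2), of "Suc k"] that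
    by (intro append_chain_nth_prop[where H = H and W = W, OF H(3) W mono]) auto
  have "u k m = 0" if "length (H (Suc m)) \<le> k" for m k
    using late[OF that] by (simp add: R_def)
  moreover have "(\<lambda>k. l2_inner (T j (u k)) (u k)) \<longlonglongrightarrow> lam $ j" for j
  proof (rule LIMSEQ_I)
    fix e :: real assume "e > 0"
    then obtain S where S: "1 / real (Suc S) < e" by (metis nat_approx_posE of_nat_Suc)
    have "cmod (l2_inner (T j (u k)) (u k) - lam $ j) < e" if "length (H S) \<le> k" for k
      using late[OF that] S by (auto simp: R_def intro: le_less_trans)
    thus "\<exists>k0. \<forall>k\<ge>k0. norm (l2_inner (T j (u k)) (u k) - lam $ j) < e" by blast
  qed
  ultimately show ?thesis
    using orthonormal_basis_partial_basis_chain[OF H(3,2,1)]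
    by (intro exI[of _ u] exI[of _ "\<lambda>m. length (H (Suc m))"]) (simp add: u_def[abs_def])
qed

lemma diagonal_op_apply:
  assumes U: "orthonormal_seq u" and NU: "\<forall>m k. N m \<le> k \<longrightarrow> u k m = 0"
  shows "diag_series u N c (\<lambda>k'. l2_inner (u k) (u k')) = (\<lambda>m. c k * u k m)"
proof
  fix m
  have "diag_series u N c (\<lambda>k'. l2_inner (u k) (u k')) m = (\<Sum>k'<N m. if k' = k then c k * u k m else 0)"
    using U unfolding diag_series_def by (intro sum.cong refl) (auto simp: orthonormal_seq_def)
  also have "\<dots> = c k * u k m" using NU by (auto simp: not_less)
  finally show "diag_series u N c (\<lambda>k'. l2_inner (u k) (u k')) m = c k * u k m" .
qed

text \<open>The compact perturbation is the diagonal operator moving each diagonal entry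
  \<open>\<langle>T j (u k), u k\<rangle>\<close> to \<open>lam $ j\<close>; the corrections tend to zero.\<close>

lemma ess_num_range_subset_D_const_compact_perturbation:
  fixes T :: "'n::finite \<Rightarrow> (nat \<Rightarrow> complex) \<Rightarrow> (nat \<Rightarrow> complex)"
  assumes T: "\<forall>j. bounded_op (T j)" and lam: "lam \<in> ess_num_range T"
  shows "\<exists>K. (\<forall>j. compact_op (K j)) \<and> lam \<in> D_const (\<lambda>j x. (\<lambda>k. T j x k + K j x k))"
proof -
  obtain x where "orthonormal_seq x" "\<forall>j. (\<lambda>k. l2_inner (T j (x k)) (x k)) \<longlonglongrightarrow> lam $ j"
    using lam by (auto simp: ess_num_range_def)
  then obtain u N where u: "orthonormal_basis u" and NU: "\<forall>m k. N m \<le> k \<longrightarrow> u k m = 0"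
    and diag: "\<forall>j. (\<lambda>k. l2_inner (T j (u k)) (u k)) \<longlonglongrightarrow> lam $ j"
    using exists_basis_with_diagonal_limit[OF T] by blast
  have U: "orthonormal_seq u" using u by (simp add: orthonormal_basis_def)
  define c where "c j k = lam $ j - l2_inner (T j (u k)) (u k)" for j k
  define K where "K j x = diag_series u N (c j) (\<lambda>k. l2_inner x (u k))" for j x
  have "c j \<longlonglongrightarrow> 0" for j
    using tendsto_diff[OF tendsto_const[of "lam $ j"] diag[rule_format, of j]] by (simp add: c_def[abs_def])
  hence "\<forall>j. compact_op (K j)" unfolding K_def[abs_def] using compact_op_diagonal[OF U NU] by blast
  moreover have "l2_inner (\<lambda>m. T j (u k) m + K j (u k) m) (u k) = lam $ j" for j k
  proof -
    have ul: "u k \<in> l2" "l2_inner (u k) (u k) = 1" using U by (auto simp: orthonormal_seq_def)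
    have "l2_inner (\<lambda>m. 1 * T j (u k) m + c j k * u k m) (u k) = l2_inner (T j (u k)) (u k) + c j k"
      using l2_inner_lincomb_left[OF bounded_op_l2[OF T[rule_format] ul(1)] ul(1) ul(1), of 1 j "c j k"] ul(2)
      by simp
    thus ?thesis by (simp add: K_def diagonal_op_apply[OF U NU] c_def)
  qed
  ultimately show ?thesis using u unfolding D_const_def by blast
qed

theorem proposition5p3:
  fixes T :: "'n::finite \<Rightarrow> (nat \<Rightarrow> complex) \<Rightarrow> (nat \<Rightarrow> complex)"
  assumes "\<forall>j. bounded_op (T j)"
  shows "(\<Union>K\<in>{K. \<forall>j. compact_op (K j)}. D_const (\<lambda>j x. (\<lambda>k. T j x k + K j x k))) = ess_num_range T"
proof
  show "(\<Union>K\<in>{K. \<forall>j. compact_op (K j)}. D_const (\<lambda>j x. (\<lambda>k. T j x k + K j x k))) \<subseteq> ess_num_range T"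
    using D_const_compact_perturbation_subset[OF assms] by blast
  show "ess_num_range T \<subseteq> (\<Union>K\<in>{K. \<forall>j. compact_op (K j)}. D_const (\<lambda>j x. (\<lambda>k. T j x k + K j x k)))"
    using ess_num_range_subset_D_const_compact_perturbation[OF assms] by blast
qed

end
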